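(* Let $F_{ij}$ ($0\le i\le m$, $0\le j\le n$) be an $m\times n$ generalized T-net in $I^3$. Then, up to interchanging the indices $i$ and $j$, there exist $a_0,\dots,a_{m+1},b_0,\dots,b_{n+1}\in\mathbb{R}^3$ and $\sigma_0,\dots,\sigma_{m+1}>0$ such that, with $\Delta_{ij}:=a_{i+1}-a_i+b_j(\sigma_{i+1}-\sigma_i)$, we have $\det(e_3,b_{j+1}-b_j,\Delta_{ij})\ne0$ for all $0\le i\le m$, $0\le j\le n$ and $$F_{ij}=-\frac{1}{\det(e_3,b_{j+1}-b_j,\Delta_{ij})}\begin{pmatrix}\det(e_1,b_{j+1}-b_j,\Delta_{ij})\\ \det(e_2,b_{j+1}-b_j,\Delta_{ij})\\ \det(a_i+\sigma_ib_j,b_{j+1}-b_j,\Delta_{ij})\end{pmatrix}.$$ Moreover, for some $\varepsilon>0$ the family $$F_{ij}(t)=-\frac{1}{\det(e_3,b_{j+1}-b_j,\Delta_{ij})}\begin{pmatrix}\det(e_1,b_{j+1}-b_j,\Delta_{ij})\\ \det(e_2,b_{j+1}-b_j,\Delta_{ij})\\ \det(P_{ij}(t),b_{j+1}-b_j,\Delta_{ij})\end{pmatrix},\quad t\in[0,\varepsilon],$$ where $$P_{ij}(t)=a_0+\sum_{k=1}^{i}\frac{(a_k-a_{k-1})(\sigma_k+\sigma_{k-1})}{\sqrt{t+\sigma_k^2}+\sqrt{t+\sigma_{k-1}^2}}+\sqrt{t+\sigma_i^2}\,b_j,$$ is a nontrivial isotropic isometric deformation of $F_{ij}$.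
   Context: $I^3$ is $\mathbb{R}^3$ with coordinates $(x,y,z)$, $e_1=(1,0,0)^T,e_2=(0,1,0)^T,e_3=(0,0,1)^T$; a line or plane is isotropic if parallel to the $z$-axis; top view of $(x,y,z)$ is $(x,y)$. Isotropic congruences: maps $\mathbf{x}\mapsto A\mathbf{x}+\mathbf{b}$, $A=\begin{pmatrix}\cos\phi&-\sin\phi&0\\ \sin\phi&\cos\phi&0\\ c_1&c_2&1\end{pmatrix}$. Metric duality: point $P=(P^1,P^2,P^3)\leftrightarrow$ plane $P^*\colon z=P^1x+P^2y-P^3$. An $m\times n$ net: points $F_{ij}$, $0\le i\le m,0\le j\le n$, with $F_{ij},F_{i+1,j},F_{i+1,j+1},F_{i,j+1}$ consecutive vertices of a convex planar quadrilateral (face $p_{ij}$) for all $0\le i<m,0\le j<n$. Its parameter lines are the broken lines $F_{i0}\dots F_{in}$ ($0\le i\le m$) and $F_{0j}\dots F_{mj}$ ($0\le j\le n$). Boundary vertices: $i\in\{0,m\}$ or $j\in\{0,n\}$; consecutive faces around non-boundary $F_{ij}$: $p_{i-1,j-1},p_{i,j-1},p_{ij},p_{i-1,j}$. Convex 4-hedral angle with vertex $O$: union of rays from $O$ meeting a convex quadrilateral in a plane not through $O$; flat angles: rays through one side; admissible: isotropic line through $O$ meets its interior. Dual-convex: $m,n\ge2$ and at each non-boundary vertex the four consecutive face planes are the planes of four consecutive flat angles of an admissible convex 4-hedral angle. A generalized T-net is a dual-convex $m\times n$ net all of whose parameter lines are planar (each lies in a plane), the parameter lines of one family lying in isotropic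 planes. Curvature at non-boundary vertex with consecutive faces $p_1..p_4$: $\Omega=\frac12\sum_{k=1}^4\det(\overline{p_k^*},\overline{p_{k+1}^*})$, $p_5=p_1$. An isotropic isometric deformation of a dual-convex net $F_{ij}$ is a continuous family of $m\times n$ nets $F_{ij}(t)$ with $F_{ij}(0)=F_{ij}$, corresponding faces isotropically congruent, and equal curvatures at corresponding non-boundary vertices; it is nontrivial if not for every $t$ is there an isotropic congruence $C_t$ with $F_{ij}(t)=C_t(F_{ij})$ for all $i,j$. *)

theory Defs
  imports "HOL-Analysis.Analysis"
begin

type_synonym point = "real^3"

definition e1 :: point where "e1 = vector [1, 0, 0]"
definition e2 :: point where "e2 = vector [0, 1, 0]"
definition e3 :: point where "e3 = vector [0, 0, 1]"

definition det3 :: "point \<Rightarrow> point \<Rightarrow> point \<Rightarrow> real" where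
  "det3 u v w = det (transpose (vector [u, v, w] :: real^3^3))"

definition det2top :: "point \<Rightarrow> point \<Rightarrow> real" where
  "det2top p q = p$1 * q$2 - p$2 * q$1"

definition iso_congruence :: "(point \<Rightarrow> point) \<Rightarrow> bool" where
  "iso_congruence C \<longleftrightarrow> (\<exists>\<phi> c1 c2 (b::point).
     C = (\<lambda>x. (vector [vector [cos \<phi>, - sin \<phi>, 0],
                        vector [sin \<phi>, cos \<phi>, 0],
                        vector [c1, c2, 1]] :: real^3^3) *v x + b))"

text \<open>A, B, C, D are consecutive vertices of a convex planar quadrilateral:
  the (open) diagonals cross and the four points are not collinear.\<close>
definition convex_quad :: "point \<Rightarrow> point \<Rightarrow> point \<Rightarrow> point \<Rightarrow> bool" where
  "convex_quad A B C D \<longleftrightarrow>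
     open_segment A C \<inter> open_segment B D \<noteq> {} \<and> \<not> collinear {A, B, C, D}"

definition is_net :: "(nat \<Rightarrow> nat \<Rightarrow> point) \<Rightarrow> nat \<Rightarrow> nat \<Rightarrow> bool" where
  "is_net F m n \<longleftrightarrow> (\<forall>i<m. \<forall>j<n.
     convex_quad (F i j) (F (Suc i) j) (F (Suc i) (Suc j)) (F i (Suc j)))"

definition face_plane :: "(nat \<Rightarrow> nat \<Rightarrow> point) \<Rightarrow> nat \<Rightarrow> nat \<Rightarrow> point set" where
  "face_plane F i j = affine hull {F i j, F (Suc i) j, F (Suc i) (Suc j), F i (Suc j)}"

definition hedral_angle :: "point \<Rightarrow> point \<Rightarrow> point \<Rightarrow> point \<Rightarrow> point \<Rightarrow> point set" where
  "hedral_angle V Q1 Q2 Q3 Q4 =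
     {V + t *\<^sub>R (q - V) | t q. t \<ge> 0 \<and> q \<in> convex hull {Q1, Q2, Q3, Q4}}"

definition admissible_angle :: "point \<Rightarrow> point \<Rightarrow> point \<Rightarrow> point \<Rightarrow> point \<Rightarrow> bool" where
  "admissible_angle V Q1 Q2 Q3 Q4 \<longleftrightarrow>
     convex_quad Q1 Q2 Q3 Q4 \<and> V \<notin> affine hull {Q1, Q2, Q3, Q4} \<and>
     (\<exists>s. V + s *\<^sub>R e3 \<in> interior (hedral_angle V Q1 Q2 Q3 Q4))"

text \<open>The plane of the flat angle through side Q Q' is affine hull {V, Q, Q'}.\<close>
definition dual_convex :: "(nat \<Rightarrow> nat \<Rightarrow> point) \<Rightarrow> nat \<Rightarrow> nat \<Rightarrow> bool" where
  "dual_convex F m n \<longleftrightarrow> m \<ge> 2 \<and> n \<ge> 2 \<and>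
     (\<forall>i j. 0 < i \<and> i < m \<and> 0 < j \<and> j < n \<longrightarrow>
        (\<exists>V Q1 Q2 Q3 Q4. admissible_angle V Q1 Q2 Q3 Q4 \<and>
           face_plane F (i-1) (j-1) = affine hull {V, Q1, Q2} \<and>
           face_plane F i (j-1) = affine hull {V, Q2, Q3} \<and>
           face_plane F i j = affine hull {V, Q3, Q4} \<and>
           face_plane F (i-1) j = affine hull {V, Q4, Q1}))"

definition lies_in_plane :: "point set \<Rightarrow> bool" where
  "lies_in_plane S \<longleftrightarrow> (\<exists>(a::point) c. a \<noteq> 0 \<and> S \<subseteq> {x. a \<bullet> x = c})"

definition lies_in_isotropic_plane :: "point set \<Rightarrow> bool" where
  "lies_in_isotropic_plane S \<longleftrightarrow>
     (\<exists>(a::point) c. a \<noteq> 0 \<and> a$3 = 0 \<and> S \<subseteq> {x. a \<bullet> x = c})"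

definition gen_T_net :: "(nat \<Rightarrow> nat \<Rightarrow> point) \<Rightarrow> nat \<Rightarrow> nat \<Rightarrow> bool" where
  "gen_T_net F m n \<longleftrightarrow> is_net F m n \<and> dual_convex F m n \<and>
     (\<forall>i\<le>m. lies_in_plane {F i j | j. j \<le> n}) \<and>
     (\<forall>j\<le>n. lies_in_plane {F i j | i. i \<le> m}) \<and>
     ((\<forall>i\<le>m. lies_in_isotropic_plane {F i j | j. j \<le> n}) \<or>
      (\<forall>j\<le>n. lies_in_isotropic_plane {F i j | i. i \<le> m}))"

text \<open>Metric dual point P* of a (non-isotropic) plane z = P1 x + P2 y - P3.\<close>
definition plane_dual :: "point set \<Rightarrow> point" where
  "plane_dual p = (THE P. p = {x. x$3 = P$1 * x$1 + P$2 * x$2 - P$3})"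

definition face_dual :: "(nat \<Rightarrow> nat \<Rightarrow> point) \<Rightarrow> nat \<Rightarrow> nat \<Rightarrow> point" where
  "face_dual F i j = plane_dual (face_plane F i j)"

definition curvature :: "(nat \<Rightarrow> nat \<Rightarrow> point) \<Rightarrow> nat \<Rightarrow> nat \<Rightarrow> real" where
  "curvature F i j =
    (let d1 = face_dual F (i-1) (j-1); d2 = face_dual F i (j-1);
         d3 = face_dual F i j; d4 = face_dual F (i-1) j
     in (det2top d1 d2 + det2top d2 d3 + det2top d3 d4 + det2top d4 d1) / 2)"

definition iso_isometric_deformation ::
  "(nat \<Rightarrow> nat \<Rightarrow> point) \<Rightarrow> nat \<Rightarrow> nat \<Rightarrow> real \<Rightarrow> (real \<Rightarrow> nat \<Rightarrow> nat \<Rightarrow> point) \<Rightarrow> bool" where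
  "iso_isometric_deformation F m n \<epsilon> Ft \<longleftrightarrow> \<epsilon> > 0 \<and>
     (\<forall>i\<le>m. \<forall>j\<le>n. continuous_on {0..\<epsilon>} (\<lambda>t. Ft t i j) \<and> Ft 0 i j = F i j) \<and>
     (\<forall>t\<in>{0..\<epsilon>}.
        is_net (Ft t) m n \<and>
        (\<forall>i<m. \<forall>j<n. \<exists>C. iso_congruence C \<and>
            C (F i j) = Ft t i j \<and> C (F (Suc i) j) = Ft t (Suc i) j \<and>
            C (F (Suc i) (Suc j)) = Ft t (Suc i) (Suc j) \<and> C (F i (Suc j)) = Ft t i (Suc j)) \<and>
        (\<forall>i j. 0 < i \<and> i < m \<and> 0 < j \<and> j < n \<longrightarrow> curvature (Ft t) i j = curvature F i j))"

definition nontrivial_deformation ::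
  "(nat \<Rightarrow> nat \<Rightarrow> point) \<Rightarrow> nat \<Rightarrow> nat \<Rightarrow> real \<Rightarrow> (real \<Rightarrow> nat \<Rightarrow> nat \<Rightarrow> point) \<Rightarrow> bool" where
  "nontrivial_deformation F m n \<epsilon> Ft \<longleftrightarrow>
     \<not> (\<forall>t\<in>{0..\<epsilon>}. \<exists>C. iso_congruence C \<and> (\<forall>i\<le>m. \<forall>j\<le>n. Ft t i j = C (F i j)))"

definition Tdelta :: "(nat \<Rightarrow> point) \<Rightarrow> (nat \<Rightarrow> point) \<Rightarrow> (nat \<Rightarrow> real) \<Rightarrow> nat \<Rightarrow> nat \<Rightarrow> point" where
  "Tdelta a b \<sigma> i j = a (Suc i) - a i + (\<sigma> (Suc i) - \<sigma> i) *\<^sub>R b j"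

definition Tpoint :: "(nat \<Rightarrow> point) \<Rightarrow> (nat \<Rightarrow> point) \<Rightarrow> (nat \<Rightarrow> real) \<Rightarrow> point \<Rightarrow> nat \<Rightarrow> nat \<Rightarrow> point" where
  "Tpoint a b \<sigma> p i j =
     (let db = b (Suc j) - b j; \<Delta> = Tdelta a b \<sigma> i j
      in (- 1 / det3 e3 db \<Delta>) *\<^sub>R vector [det3 e1 db \<Delta>, det3 e2 db \<Delta>, det3 p db \<Delta>])"

definition Tpath :: "(nat \<Rightarrow> point) \<Rightarrow> (nat \<Rightarrow> point) \<Rightarrow> (nat \<Rightarrow> real) \<Rightarrow> real \<Rightarrow> nat \<Rightarrow> nat \<Rightarrow> point" where
  "Tpath a b \<sigma> t i j =
     a 0 + (\<Sum>k\<in>{1..i}. ((\<sigma> k + \<sigma> (k-1)) / (sqrt (t + (\<sigma> k)^2) + sqrt (t + (\<sigma> (k-1))^2)))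
                          *\<^sub>R (a k - a (k-1)))
         + sqrt (t + (\<sigma> i)^2) *\<^sub>R b j"

text \<open>The conclusion of the proposition for a given indexing of the net.\<close>
definition T_representation :: "(nat \<Rightarrow> nat \<Rightarrow> point) \<Rightarrow> nat \<Rightarrow> nat \<Rightarrow> bool" where
  "T_representation F m n \<longleftrightarrow>
     (\<exists>(a::nat \<Rightarrow> point) (b::nat \<Rightarrow> point) (\<sigma>::nat \<Rightarrow> real).
        (\<forall>k\<le>Suc m. \<sigma> k > 0) \<and>
        (\<forall>i\<le>m. \<forall>j\<le>n. det3 e3 (b (Suc j) - b j) (Tdelta a b \<sigma> i j) \<noteq> 0 \<and>
                         F i j = Tpoint a b \<sigma> (a i + \<sigma> i *\<^sub>R b j) i j) \<and>
        (\<exists>\<epsilon>>0. iso_isometric_deformation F m n \<epsilon> (\<lambda>t i j. Tpoint a b \<sigma> (Tpath a b \<sigma> t i j) i j) \<and>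
                nontrivial_deformation F m n \<epsilon> (\<lambda>t i j. Tpoint a b \<sigma> (Tpath a b \<sigma> t i j) i j)))"

end

(*
  Metric duality turns the net into its dual net of face points D_ij, face (i,j) lying in the plane
  dual to D_ij, and every vertex is the pole of the plane through the dual points of its faces.
  Suppose the columns of the net lie in isotropic planes. Then the dual edges crossing column l are
  all parallel to one vector; dual convexity makes consecutive ones positive multiples of each other,
  and planarity of the rows makes the ratios independent of l. Hence D_(k-1,l-1) = a_k + sigma_k b_l
  with sigma_k > 0, and adding ghost dual points outside the net, built from the row planes and the
  column directions, extends this to the boundary vertices and gives the stated formula for F_ij.

  Moving the dual points to P_ij(t) keeps the directions b_(j+1) - b_j and Delta_ij of all dual
  edges. So each face of F(t) is the image of the corresponding face of F under a shear along e3,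
  and the curvature at a vertex, the signed area of its dual quadrilateral, stays
  (sigma_i + sigma_(i+1))/2 * det(Delta_ij, b_(j+1) - b_j). For t > 0 two neighbouring faces are
  sheared by different vectors, so no single congruence realizes F(t). Isotropic rows are handled
  by transposing the net.
*)

theory Submission
  imports Defs
begin

section \<open>Metric duality\<close>

lemma e_nth [simp]:
  "e1$1 = 1" "e1$2 = 0" "e1$3 = 0"
  "e2$1 = 0" "e2$2 = 1" "e2$3 = 0"
  "e3$1 = 0" "e3$2 = 0" "e3$3 = 1"
  by (simp_all add: e1_def e2_def e3_def)

lemma det3_eq:
  "det3 u v w = u$1*(v$2*w$3 - v$3*w$2) - u$2*(v$1*w$3 - v$3*w$1) + u$3*(v$1*w$2 - v$2*w$1)"
  unfolding det3_def det_3 by (simp add: transpose_def algebra_simps)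

lemma det3_same [simp]: "det3 u u v = 0" "det3 v u v = 0"
  by (simp_all add: det3_eq algebra_simps)

lemma det3_linear_first: "det3 x u v = x$1 * det3 e1 u v + x$2 * det3 e2 u v + x$3 * det3 e3 u v"
  by (simp add: det3_eq algebra_simps)

lemma det3_diff_first: "det3 (q - p) u v = det3 q u v - det3 p u v"
  by (simp add: det3_eq algebra_simps)

lemma inner_point_eq: "(a::point) \<bullet> x = a$1*x$1 + a$2*x$2 + a$3*x$3"
  by (simp add: inner_vec_def sum_3)

text \<open>The plane \<open>D\<^sup>*\<close> has height \<open>dual_height p D\<close> over the top view of \<open>p\<close>, so \<open>p \<in> D\<^sup>*\<close> iff
  \<open>dual_height p D = p$3\<close>, a relation symmetric in \<open>p\<close> and \<open>D\<close>. As \<open>dual_height p\<close> is linear,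
  \<open>dual_height p u = 0\<close> says that \<open>u\<close> is a direction of the plane \<open>p\<^sup>*\<close>.\<close>

definition dual_height :: "point \<Rightarrow> point \<Rightarrow> real" where
  "dual_height p D = p$1*D$1 + p$2*D$2 - D$3"

definition dual_plane :: "point \<Rightarrow> point set" where
  "dual_plane D = {x. x$3 = D$1*x$1 + D$2*x$2 - D$3}"

lemma mem_dual_plane: "x \<in> dual_plane D \<longleftrightarrow> dual_height x D = x$3"
  unfolding dual_plane_def dual_height_def by (auto simp: mult.commute)

lemma dual_height_add: "dual_height p (x + y) = dual_height p x + dual_height p y"
  by (simp add: dual_height_def algebra_simps)

lemma dual_height_diff: "dual_height p (x - y) = dual_height p x - dual_height p y"
  by (simp add: dual_height_def algebra_simps)

lemma dual_height_scaleR: "dual_height p (c *\<^sub>R x) = c * dual_height p x"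
  by (simp add: dual_height_def algebra_simps)

lemma dual_height_zero [simp]: "dual_height p 0 = 0"
  by (simp add: dual_height_def)

lemma dual_plane_eq_hyperplane: "dual_plane D = {x. vector [D$1, D$2, -1] \<bullet> x = D$3}"
  by (auto simp: dual_plane_def inner_point_eq algebra_simps)

lemma dual_plane_normal_ne_0: "vector [D$1, D$2, -1] \<noteq> (0::point)"
  by (metis vector_3(3) zero_index neg_equal_0_iff_equal zero_neq_one)

lemma dual_plane_inject: "dual_plane X = dual_plane Y \<Longrightarrow> X = Y"
proof -
  assume e: "dual_plane X = dual_plane Y"
  have p: "\<And>x::point. x$3 = X$1*x$1 + X$2*x$2 - X$3 \<longleftrightarrow> x$3 = Y$1*x$1 + Y$2*x$2 - Y$3"
    using e unfolding dual_plane_def set_eq_iff mem_Collect_eq by blast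
  have 3: "X$3 = Y$3" using p[of "vector [0, 0, - X$3]"] by simp
  have 1: "X$1 = Y$1" using p[of "vector [1, 0, X$1 - X$3]"] 3 by simp
  have 2: "X$2 = Y$2" using p[of "vector [0, 1, X$2 - X$3]"] 3 by simp
  show "X = Y" using 1 2 3 by (simp add: vec_eq_iff forall_3)
qed

lemma plane_dual_dual_plane [simp]: "plane_dual (dual_plane X) = X"
  unfolding plane_dual_def
proof (rule the_equality)
  fix P :: point assume "dual_plane X = {x. x$3 = P$1 * x$1 + P$2 * x$2 - P$3}"
  then show "P = X" using dual_plane_inject by (metis dual_plane_def)
qed (simp add: dual_plane_def)

lemma top_view_ne_if_dual_plane:
  assumes "X \<in> dual_plane P" "Y \<in> dual_plane P" "X \<noteq> Y"
  shows "X$1 \<noteq> Y$1 \<or> X$2 \<noteq> Y$2"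
  using assms by (auto simp: dual_plane_def vec_eq_iff forall_3)

text \<open>The plane through \<open>p\<close> spanned by \<open>u\<close> and \<open>v\<close> is the dual plane of \<open>plane_pole p u v\<close>, provided
  \<open>det3 e3 u v \<noteq> 0\<close>, i.e. the plane is not isotropic; otherwise the division yields a junk value.\<close>

definition plane_pole :: "point \<Rightarrow> point \<Rightarrow> point \<Rightarrow> point" where
  "plane_pole p u v = (- 1 / det3 e3 u v) *\<^sub>R vector [det3 e1 u v, det3 e2 u v, det3 p u v]"

lemma Tpoint_eq_plane_pole: "Tpoint a b \<sigma> p i j = plane_pole p (b (Suc j) - b j) (Tdelta a b \<sigma> i j)"
  by (simp add: Tpoint_def plane_pole_def Let_def)

lemma plane_pole_nth:
  "plane_pole p u v $ 1 = - det3 e1 u v / det3 e3 u v"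
  "plane_pole p u v $ 2 = - det3 e2 u v / det3 e3 u v"
  "plane_pole p u v $ 3 = - det3 p u v / det3 e3 u v"
  by (simp_all add: plane_pole_def)

lemma dual_height_plane_pole:
  assumes "det3 e3 u v \<noteq> 0"
  shows "dual_height (plane_pole p u v) x = - det3 x u v / det3 e3 u v"
proof -
  have "dual_height (plane_pole p u v) x
      = (- det3 e1 u v * x$1 - det3 e2 u v * x$2 - det3 e3 u v * x$3) / det3 e3 u v"
    using assms by (simp add: dual_height_def plane_pole_nth field_simps)
  also have "\<dots> = - det3 x u v / det3 e3 u v"
    by (subst det3_linear_first[of x]) (simp add: algebra_simps)
  finally show ?thesis .
qed

lemma plane_pole_directions:
  assumes "det3 e3 u v \<noteq> 0"
  shows "dual_height (plane_pole p u v) u = 0" "dual_height (plane_pole p u v) v = 0"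
  using assms by (simp_all add: dual_height_plane_pole)

lemma plane_pole_in_dual_plane:
  assumes "det3 e3 u v \<noteq> 0"
  shows "dual_height (plane_pole p u v) (p + \<alpha> *\<^sub>R u + \<beta> *\<^sub>R v) = plane_pole p u v $ 3"
  using assms
    by (simp add: dual_height_add dual_height_scaleR dual_height_plane_pole plane_pole_nth)

lemma plane_pole_shift:
  assumes "det3 e3 u v \<noteq> 0"
  shows "plane_pole q u v = plane_pole p u v + dual_height (plane_pole p u v) (q - p) *\<^sub>R e3"
  using assms
  by (simp add: vec_eq_iff forall_3 plane_pole_nth dual_height_plane_pole det3_diff_first diff_divide_distrib)

lemma parallel_if_top_parallel:
  fixes u v X :: point
  assumes u3: "u$3 = X$1 * u$1 + X$2 * u$2" and v3: "v$3 = X$1 * v$1 + X$2 * v$2"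
    and top: "u$1 * v$2 = u$2 * v$1"
  shows "u = 0 \<or> v = 0 \<or> (\<exists>c. v = c *\<^sub>R u)"
proof (cases "u$1 = 0")
  case True
  show ?thesis
  proof (cases "u$2 = 0")
    case True2: True
    then have "u = 0" using True u3 by (simp add: vec_eq_iff forall_3)
    then show ?thesis by simp
  next
    case False
    define c where "c = v$2 / u$2"
    have v1: "v$1 = 0" using top True False by simp
    have c2: "v$2 = c * u$2" using False by (simp add: c_def)
    have "v$3 = c * u$3" using v3 u3 v1 True c2 by (simp add: algebra_simps)
    then have "v = c *\<^sub>R u" using True v1 c2 by (simp add: vec_eq_iff forall_3)
    then show ?thesis by blast
  qed
next
  case False
  define c where "c = v$1 / u$1"
  have c1: "v$1 = c * u$1" using False by (simp add: c_def)
  have "v$2 * u$1 = c * u$2 * u$1" using top c1 by (simp add: algebra_simps)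
  then have c2: "v$2 = c * u$2" using False by simp
  have "v$3 = c * u$3" using v3 u3 c1 c2 by (simp add: algebra_simps)
  then have "v = c *\<^sub>R u" using c1 c2 by (simp add: vec_eq_iff forall_3)
  then show ?thesis by blast
qed

definition lin_indep :: "point \<Rightarrow> point \<Rightarrow> bool" where
  "lin_indep u v \<longleftrightarrow> (\<forall>\<alpha> \<beta>. \<alpha> *\<^sub>R u + \<beta> *\<^sub>R v = 0 \<longrightarrow> \<alpha> = 0 \<and> \<beta> = 0)"

lemma lin_indep_commute: "lin_indep u v \<Longrightarrow> lin_indep v u"
  unfolding lin_indep_def by (metis add.commute)

lemma lin_indep_scaleR: "lin_indep u v \<Longrightarrow> c \<noteq> 0 \<Longrightarrow> lin_indep u (c *\<^sub>R v)"
  unfolding lin_indep_def by (metis mult_eq_0_iff scaleR_scaleR)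

lemma lin_indep_scaleR_iff: "c \<noteq> 0 \<Longrightarrow> lin_indep u (c *\<^sub>R v) \<longleftrightarrow> lin_indep u v"
proof
  assume "c \<noteq> 0" "lin_indep u (c *\<^sub>R v)"
  then show "lin_indep u v" using lin_indep_scaleR[of u "c *\<^sub>R v" "1/c"] by simp
qed (rule lin_indep_scaleR)

lemma lin_indep_uminus_iff: "lin_indep u (- v) \<longleftrightarrow> lin_indep u v"
  using lin_indep_scaleR_iff[of "-1" u v] by simp

lemma lin_indep_add_scaleR: "lin_indep u v \<Longrightarrow> lin_indep u (v + c *\<^sub>R u)"
  unfolding lin_indep_def
proof (intro allI impI)
  fix \<alpha> \<beta> assume indep: "\<forall>\<alpha> \<beta>. \<alpha> *\<^sub>R u + \<beta> *\<^sub>R v = 0 \<longrightarrow> \<alpha> = 0 \<and> \<beta> = 0"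
    and "\<alpha> *\<^sub>R u + \<beta> *\<^sub>R (v + c *\<^sub>R u) = 0"
  then have "(\<alpha> + \<beta> * c) *\<^sub>R u + \<beta> *\<^sub>R v = 0" by (simp add: algebra_simps)
  then have "\<alpha> + \<beta> * c = 0 \<and> \<beta> = 0" using indep by blast
  then show "\<alpha> = 0 \<and> \<beta> = 0" by auto
qed

lemma lin_indep_if_not_parallel:
  assumes "u \<noteq> 0" "\<And>c. v \<noteq> c *\<^sub>R u"
  shows "lin_indep u v"
  unfolding lin_indep_def
proof (intro allI impI)
  fix \<alpha> \<beta> assume comb: "\<alpha> *\<^sub>R u + \<beta> *\<^sub>R v = 0"
  have "\<beta> = 0"
  proof (rule ccontr)
    assume "\<beta> \<noteq> 0"
    have "\<beta> *\<^sub>R v = - \<alpha> *\<^sub>R u" using comb by (simp add: eq_neg_iff_add_eq_0 add.commute)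
    then have "(1/\<beta>) *\<^sub>R (\<beta> *\<^sub>R v) = (1/\<beta>) *\<^sub>R (- \<alpha> *\<^sub>R u)" by simp
    then have "v = (- \<alpha> / \<beta>) *\<^sub>R u" using \<open>\<beta> \<noteq> 0\<close> by simp
    then show False using assms(2) by blast
  qed
  then show "\<alpha> = 0 \<and> \<beta> = 0" using comb assms(1) by simp
qed

lemma lin_indep_nonzero: "lin_indep u v \<Longrightarrow> u \<noteq> 0"
  unfolding lin_indep_def
    by (metis scaleR_one scaleR_zero_left scaleR_zero_right add.right_neutral one_neq_zero)

lemma lin_indep_not_parallel: "lin_indep u v \<Longrightarrow> v \<noteq> c *\<^sub>R u"
proof
  assume "lin_indep u v" "v = c *\<^sub>R u"
  then have "c *\<^sub>R u + (-1) *\<^sub>R v = 0" by simp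
  then show False using \<open>lin_indep u v\<close> unfolding lin_indep_def by fastforce
qed

lemma eq_plane_pole:
  assumes hu: "dual_height G u = 0" and hv: "dual_height G v = 0" and hp: "dual_height G p = G$3"
    and indep: "lin_indep u v"
  shows "det3 e3 u v \<noteq> 0 \<and> G = plane_pole p u v"
proof -
  have u3: "u$3 = G$1 * u$1 + G$2 * u$2" using hu by (simp add: dual_height_def algebra_simps)
  have v3: "v$3 = G$1 * v$1 + G$2 * v$2" using hv by (simp add: dual_height_def algebra_simps)
  have det: "det3 e3 u v \<noteq> 0"
  proof
    assume "det3 e3 u v = 0"
    then have "u$1 * v$2 = u$2 * v$1" by (simp add: det3_eq)
    then show False
      using parallel_if_top_parallel[OF u3 v3] lin_indep_nonzero[OF indep]
        lin_indep_nonzero[OF lin_indep_commute[OF indep]] lin_indep_not_parallel[OF indep] by blast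
  qed
  have "det3 e1 u v = - G$1 * det3 e3 u v" "det3 e2 u v = - G$2 * det3 e3 u v"
    using u3 v3 by (simp_all add: det3_eq algebra_simps)
  then have top: "plane_pole p u v $ 1 = G$1" "plane_pole p u v $ 2 = G$2"
    using det by (simp_all add: plane_pole_nth)
  have "plane_pole p u v $ 3 = dual_height (plane_pole p u v) p"
    using plane_pole_in_dual_plane[OF det, of p 0 0] by simp
  also have "\<dots> = G$3" using top hp by (simp add: dual_height_def)
  finally show ?thesis using top det by (simp add: vec_eq_iff forall_3)
qed

lemma dual_height_eq_0_imp_eq_0:
  assumes "dual_height A z = 0" "dual_height B z = 0" "dual_height C z = 0"
    and "det2top (B - A) (C - A) \<noteq> 0"
  shows "z = 0"
proof -
  let ?p1 = "(B - A)$1" and ?p2 = "(B - A)$2" and ?q1 = "(C - A)$1" and ?q2 = "(C - A)$2"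
  have e1: "?p1 * z$1 + ?p2 * z$2 = 0" using assms(1,2) by (simp add: dual_height_def algebra_simps)
  have e2: "?q1 * z$1 + ?q2 * z$2 = 0" using assms(1,3) by (simp add: dual_height_def algebra_simps)
  have d: "?p1 * ?q2 - ?p2 * ?q1 \<noteq> 0" using assms(4) by (simp add: det2top_def)
  have "z$1 * (?p1 * ?q2 - ?p2 * ?q1) = ?q2 * (?p1 * z$1 + ?p2 * z$2) - ?p2 * (?q1 * z$1 + ?q2 * z$2)"
    by (simp add: algebra_simps)
  then have "z$1 = 0" using e1 e2 d by simp
  moreover have "z$2 * (?p1 * ?q2 - ?p2 * ?q1) = ?p1 * (?q1 * z$1 + ?q2 * z$2) - ?q1 * (?p1 * z$1 + ?p2 * z$2)"
    by (simp add: algebra_simps)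
  then have "z$2 = 0" using e1 e2 d by simp
  moreover from calculation have "z$3 = 0" using assms(1) by (simp add: dual_height_def)
  ultimately show ?thesis by (simp add: vec_eq_iff forall_3)
qed

lemma parallel_if_dual_height_eq_0:
  assumes "dual_height A x = 0" "dual_height B x = 0" "dual_height A y = 0" "dual_height B y = 0"
    and "A$1 \<noteq> B$1 \<or> A$2 \<noteq> B$2" "y \<noteq> 0"
  shows "\<exists>c. x = c *\<^sub>R y"
proof -
  let ?p1 = "B$1 - A$1" and ?p2 = "B$2 - A$2"
  have ex: "?p1 * x$1 + ?p2 * x$2 = 0" using assms(1,2) by (simp add: dual_height_def algebra_simps)
  have ey: "?p1 * y$1 + ?p2 * y$2 = 0" using assms(3,4) by (simp add: dual_height_def algebra_simps)
  have "?p1 * (y$1 * x$2 - y$2 * x$1) = x$2 * (?p1 * y$1 + ?p2 * y$2) - y$2 * (?p1 * x$1 + ?p2 * x$2)"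
    "?p2 * (y$1 * x$2 - y$2 * x$1) = y$1 * (?p1 * x$1 + ?p2 * x$2) - x$1 * (?p1 * y$1 + ?p2 * y$2)"
    by (simp_all add: algebra_simps)
  then have "y$1 * x$2 = y$2 * x$1" using ex ey assms(5) by auto
  moreover have "y$3 = A$1 * y$1 + A$2 * y$2" "x$3 = A$1 * x$1 + A$2 * x$2"
    using assms(1,3) by (simp_all add: dual_height_def algebra_simps)
  ultimately show ?thesis using parallel_if_top_parallel[of y A x] assms(6)
    by (metis scale_zero_left)
qed

section \<open>Convex quadrilaterals and isotropic shears\<close>

lemma convex_quad_not_collinear:
  assumes "convex_quad A B C D"
  shows "\<not> collinear {A, B, C}"
proof
  assume col: "collinear {A, B, C}"
  from assms obtain X where X1: "X \<in> open_segment A C" and X2: "X \<in> open_segment B D"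
    and nc: "\<not> collinear {A, B, C, D}" unfolding convex_quad_def by blast
  have AC: "A \<noteq> C" using X1 by auto
  let ?L = "affine hull {A, C}"
  have "collinear {A, C, B}" using col by (simp add: insert_commute)
  then have B: "B \<in> ?L" using collinear_3_affine_hull[OF AC] by blast
  have X: "X \<in> ?L"
    using X1 open_closed_segment segment_convex_hull convex_hull_subset_affine_hull by blast
  from X2 obtain u where u: "0 < u" "X = (1 - u) *\<^sub>R B + u *\<^sub>R D" by (auto simp: in_segment)
  then have uD: "u *\<^sub>R D = X - (1 - u) *\<^sub>R B" by (simp add: algebra_simps)
  have "D = (1/u) *\<^sub>R (u *\<^sub>R D)" using u by simp
  also have "\<dots> = (1/u) *\<^sub>R X + (1 - 1/u) *\<^sub>R B"
    using u(1) by (simp add: uD algebra_simps diff_divide_distrib)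
  finally have "D = (1/u) *\<^sub>R X + (1 - 1/u) *\<^sub>R B" .
  then have "D \<in> ?L" using mem_affine[OF affine_affine_hull X B, of "1/u" "1 - 1/u"] by simp
  then have "{A, B, C, D} \<subseteq> ?L" using B by (auto simp: hull_inc)
  then show False using nc collinear_subset collinear_affine_hull_collinear collinear_2 by metis
qed

lemma convex_quad_rotate: "convex_quad A B C D \<Longrightarrow> convex_quad B C D A"
  unfolding convex_quad_def by (auto simp: open_segment_commute insert_commute)

lemma convex_quad_reverse: "convex_quad A B C D \<Longrightarrow> convex_quad A D C B"
  unfolding convex_quad_def by (auto simp: open_segment_commute insert_commute)

lemma det2top_ne_0_if_not_collinear:
  assumes "A \<in> dual_plane X" "B \<in> dual_plane X" "C \<in> dual_plane X" "\<not> collinear {A, B, C}"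
  shows "det2top (B - A) (C - A) \<noteq> 0"
proof
  assume "det2top (B - A) (C - A) = 0"
  then have "(B - A)$1 * (C - A)$2 = (B - A)$2 * (C - A)$1" by (simp add: det2top_def)
  moreover have "(B - A)$3 = X$1 * (B - A)$1 + X$2 * (B - A)$2" "(C - A)$3 = X$1 * (C - A)$1 + X$2 * (C - A)$2"
    using assms(1-3) by (simp_all add: dual_plane_def algebra_simps)
  ultimately have "collinear {0, B - A, C - A}"
    using parallel_if_top_parallel[of "B - A" X "C - A"] by (simp add: collinear_lemma)
  then have "collinear {B, A, C}" by (subst collinear_3) auto
  then show False using assms(4) by (simp add: insert_commute)
qed

lemma affine_hull_convex_quad_eq_hyperplane:
  fixes a :: point
  assumes "convex_quad A B C D" "a \<noteq> 0" "{A, B, C, D} \<subseteq> {x. a \<bullet> x = c}"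
  shows "affine hull {A, B, C, D} = {x. a \<bullet> x = c}"
proof -
  have sub: "affine hull {A, B, C, D} \<subseteq> {x. a \<bullet> x = c}"
    using assms(3) by (intro hull_minimal) (auto simp: affine_hyperplane)
  have "aff_dim {A, B, C} > 1"
    using convex_quad_not_collinear[OF assms(1)] by (simp add: collinear_aff_dim)
  moreover have "aff_dim {A, B, C} \<le> aff_dim {A, B, C, D}" by (intro aff_dim_subset) auto
  moreover have "aff_dim {A, B, C, D} \<le> aff_dim {x. a \<bullet> x = c}"
    using aff_dim_subset[OF sub] by simp
  ultimately have "aff_dim (affine hull {A, B, C, D}) = aff_dim {x. a \<bullet> x = c}"
    using assms(2) by simp
  then show ?thesis
    by (intro affine_dim_equal) (auto simp: affine_hyperplane sub)
qed

lemma affine_hull_convex_quad: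
  assumes "convex_quad A B C D"
    and "A \<in> dual_plane X" "B \<in> dual_plane X" "C \<in> dual_plane X" "D \<in> dual_plane X"
  shows "affine hull {A, B, C, D} = dual_plane X"
  using affine_hull_convex_quad_eq_hyperplane[OF assms(1) dual_plane_normal_ne_0[of X], of "X$3"] assms(2-5)
  unfolding dual_plane_eq_hyperplane by simp

definition shear :: "point \<Rightarrow> point \<Rightarrow> point" where
  "shear w x = x + dual_height x w *\<^sub>R e3"

lemma shear_nth [simp]: "shear w x $ 1 = x$1" "shear w x $ 2 = x$2" "shear w x $ 3 = x$3 + dual_height x w"
  by (simp_all add: shear_def)

lemma shear_minus_shear [simp]: "shear (- w) (shear w x) = x"
  by (simp add: vec_eq_iff forall_3 dual_height_def)

lemma shear_combination: "shear w ((1 - u) *\<^sub>R A + u *\<^sub>R C) = (1 - u) *\<^sub>R shear w A + u *\<^sub>R shear w C"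
  by (simp add: vec_eq_iff forall_3 dual_height_def algebra_simps)

lemma shear_open_segment: "X \<in> open_segment A C \<Longrightarrow> shear w X \<in> open_segment (shear w A) (shear w C)"
  unfolding in_segment by (metis shear_combination shear_minus_shear)

lemma collinear_shear: "collinear S \<Longrightarrow> collinear (shear w ` S)"
proof -
  assume "collinear S"
  then obtain u where u: "\<forall>x\<in>S. \<forall>y\<in>S. \<exists>c. x - y = c *\<^sub>R u" unfolding collinear_def by blast
  have "\<exists>c. x - y = c *\<^sub>R shear w u - c *\<^sub>R shear w 0" if xy: "x \<in> shear w ` S" "y \<in> shear w ` S" for x y
  proof -
    obtain x' y' where xy: "x' \<in> S" "y' \<in> S" "x = shear w x'" "y = shear w y'" using xy by blast
    then obtain c where c: "x' - y' = c *\<^sub>R u" using u by blast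
    have "x' $ k - y' $ k = c * u $ k" for k using arg_cong[OF c, of "\<lambda>z. z $ k"] by simp
    then have "x - y = c *\<^sub>R shear w u - c *\<^sub>R shear w 0"
      unfolding xy by (simp add: vec_eq_iff forall_3 dual_height_def algebra_simps)
    then show ?thesis by blast
  qed
  then show ?thesis unfolding collinear_def by (metis scaleR_right_diff_distrib)
qed

lemma convex_quad_shear:
  assumes "convex_quad A B C D"
  shows "convex_quad (shear w A) (shear w B) (shear w C) (shear w D)"
proof -
  from assms obtain X where X: "X \<in> open_segment A C" "X \<in> open_segment B D"
    and nc: "\<not> collinear {A, B, C, D}" unfolding convex_quad_def by blast
  have "shear w X \<in> open_segment (shear w A) (shear w C) \<inter> open_segment (shear w B) (shear w D)"
    using X shear_open_segment by blast
  moreover have "\<not> collinear {shear w A, shear w B, shear w C, shear w D}"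
  proof
    assume "collinear {shear w A, shear w B, shear w C, shear w D}"
    then have "collinear (shear (- w) ` {shear w A, shear w B, shear w C, shear w D})"
      by (rule collinear_shear)
    then show False using nc by simp
  qed
  ultimately show ?thesis unfolding convex_quad_def by blast
qed

lemma iso_congruence_shear: "iso_congruence (shear w)"
  unfolding iso_congruence_def
proof (intro exI)
  show "shear w = (\<lambda>x. (vector [vector [cos 0, - sin 0, 0], vector [sin 0, cos 0, 0],
        vector [w$1, w$2, 1]] :: real^3^3) *v x + vector [0, 0, - w$3])"
    by (rule ext) (simp add: vec_eq_iff forall_3 matrix_vector_mult_def sum_3 dual_height_def algebra_simps)
qed

lemma shear_inject: "shear w = shear w' \<Longrightarrow> w = w'"
proof -
  assume e: "shear w = shear w'"
  have "dual_height x w = dual_height x w'" for x using arg_cong[OF e, of "\<lambda>f. f x $ 3"] by simp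
  then have "dual_height x (w - w') = 0" for x by (simp add: dual_height_diff)
  from this[of 0] this[of e1] this[of e2] show "w = w'"
    by (simp add: dual_height_def vec_eq_iff forall_3)
qed

lemma rotation_fixing_nonzero_vector:
  fixes c s w1 w2 :: real
  assumes "c * w1 - s * w2 = w1" "s * w1 + c * w2 = w2" "w1 \<noteq> 0 \<or> w2 \<noteq> 0" "s^2 + c^2 = 1"
  shows "c = 1 \<and> s = 0"
proof -
  have "(c - 1) * (w1^2 + w2^2) = w1 * (c * w1 - s * w2 - w1) + w2 * (s * w1 + c * w2 - w2)"
    by (simp add: power2_eq_square algebra_simps)
  also have "\<dots> = 0" using assms(1,2) by simp
  finally have "(c - 1) * (w1^2 + w2^2) = 0" .
  moreover have "w1^2 + w2^2 > 0" using assms(3) by (auto simp: add_pos_nonneg add_nonneg_pos)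
  ultimately have c: "c = 1" by (metis mult_eq_0_iff less_irrefl eq_iff_diff_eq_0)
  then have "s^2 = 0" using assms(4) by simp
  then show ?thesis using c by simp
qed

text \<open>Agreeing with a shear, \<open>C\<close> fixes the top views of \<open>A\<close> and \<open>B\<close>, so its rotation part is trivial.\<close>

lemma iso_congruence_eq_shear:
  assumes "iso_congruence C" and top: "det2top (B - A) (G - A) \<noteq> 0"
    and agree: "C A = shear w A" "C B = shear w B" "C G = shear w G"
  shows "C = shear w"
proof -
  from assms(1) obtain \<phi> c1 c2 t where C: "C = (\<lambda>x. (vector [vector [cos \<phi>, - sin \<phi>, 0],
      vector [sin \<phi>, cos \<phi>, 0], vector [c1, c2, 1]] :: real^3^3) *v x + t)"
    unfolding iso_congruence_def by blast
  have C_nth: "C x $ 1 = cos \<phi> * x$1 - sin \<phi> * x$2 + t$1"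
    "C x $ 2 = sin \<phi> * x$1 + cos \<phi> * x$2 + t$2"
    "C x $ 3 = c1 * x$1 + c2 * x$2 + x$3 + t$3" for x
    unfolding C by (simp_all add: matrix_vector_mult_def sum_3)
  have fix_top: "C x $ 1 = x $ 1" "C x $ 2 = x $ 2" if "x \<in> {A, B, G}" for x
    using that agree by auto
  have nz: "(B - A)$1 \<noteq> 0 \<or> (B - A)$2 \<noteq> 0" using top by (auto simp: det2top_def)
  have "cos \<phi> * (B - A) $ 1 - sin \<phi> * (B - A) $ 2 = (B - A) $ 1"
    "sin \<phi> * (B - A) $ 1 + cos \<phi> * (B - A) $ 2 = (B - A) $ 2"
    using fix_top[of A] fix_top[of B] by (simp_all add: C_nth algebra_simps)
  from rotation_fixing_nonzero_vector[OF this nz sin_cos_squared_add]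
  have rot: "cos \<phi> = 1" "sin \<phi> = 0" by simp_all
  have "t$1 = 0" "t$2 = 0" using fix_top[of A] rot by (simp_all add: C_nth)
  define v :: point where "v = vector [c1, c2, - t$3]"
  have C_shear: "C = shear v"
  proof
    fix x show "C x = shear v x"
      using rot \<open>t$1 = 0\<close> \<open>t$2 = 0\<close> by (simp add: vec_eq_iff forall_3 C_nth dual_height_def v_def)
  qed
  have "dual_height x v = dual_height x w" if "shear v x = shear w x" for x
    using arg_cong[OF that, of "\<lambda>y. y $ 3"] by simp
  then have "dual_height x (v - w) = 0" if "x \<in> {A, B, G}" for x
    using that agree by (auto simp: C_shear dual_height_diff)
  then have "v - w = 0" by (intro dual_height_eq_0_imp_eq_0[OF _ _ _ top]) auto
  then show ?thesis using C_shear by simp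
qed

section \<open>The deformation of a parametrized net\<close>

lemma det2top_shoelace_trapezoid:
  fixes A d w :: point
  shows "det2top A (A + c *\<^sub>R d) + det2top (A + c *\<^sub>R d) (A + c *\<^sub>R d + s' *\<^sub>R w)
         + det2top (A + c *\<^sub>R d + s' *\<^sub>R w) (A + s *\<^sub>R w) + det2top (A + s *\<^sub>R w) A
       = c * (s + s') * det2top d w" by (simp add: det2top_def algebra_simps)

locale T_parametrization =
  fixes F :: "nat \<Rightarrow> nat \<Rightarrow> point" and m n :: nat
    and a b :: "nat \<Rightarrow> point" and \<sigma> :: "nat \<Rightarrow> real"
  assumes sigma_pos: "\<And>k. k \<le> Suc m \<Longrightarrow> \<sigma> k > 0"
    and det_ne_0: "\<And>i j. i \<le> m \<Longrightarrow> j \<le> n \<Longrightarrow> det3 e3 (b (Suc j) - b j) (Tdelta a b \<sigma> i j) \<noteq> 0"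
    and F_eq: "\<And>i j. i \<le> m \<Longrightarrow> j \<le> n \<Longrightarrow> F i j = Tpoint a b \<sigma> (a i + \<sigma> i *\<^sub>R b j) i j"
    and m_pos: "0 < m" and n_gt_1: "1 < n"
    and net: "is_net F m n"
begin

definition "db j = b (Suc j) - b j"
definition "\<Delta> i j = Tdelta a b \<sigma> i j"
definition "\<rho> t k = sqrt (t + (\<sigma> k)^2)"
definition "\<kappa> t k = (\<sigma> k + \<sigma> (k-1)) / (\<rho> t k + \<rho> t (k-1))"
definition "P t i j = Tpath a b \<sigma> t i j"
definition "Ft t i j = Tpoint a b \<sigma> (P t i j) i j"

lemma rho_pos: "t \<ge> 0 \<Longrightarrow> k \<le> Suc m \<Longrightarrow> \<rho> t k > 0"
  using sigma_pos[of k] by (simp add: \<rho>_def add_nonneg_pos)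

lemma rho_0: "k \<le> Suc m \<Longrightarrow> \<rho> 0 k = \<sigma> k"
  using sigma_pos[of k] by (simp add: \<rho>_def)

lemma P_eq: "P t i j = a 0 + (\<Sum>k\<in>{1..i}. \<kappa> t k *\<^sub>R (a k - a (k-1))) + \<rho> t i *\<^sub>R b j"
  by (simp add: P_def Tpath_def \<kappa>_def \<rho>_def)

lemma kappa_rho_sum:
  "t \<ge> 0 \<Longrightarrow> i \<le> m \<Longrightarrow> \<kappa> t (Suc i) * (\<rho> t i + \<rho> t (Suc i)) = \<sigma> i + \<sigma> (Suc i)"
  using rho_pos[of t i] rho_pos[of t "Suc i"] by (simp add: \<kappa>_def field_simps)

lemma rho_Suc_diff:
  assumes "t \<ge> 0" "i \<le> m"
  shows "\<rho> t (Suc i) - \<rho> t i = \<kappa> t (Suc i) * (\<sigma> (Suc i) - \<sigma> i)"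
proof -
  have "(\<rho> t (Suc i) - \<rho> t i) * (\<rho> t (Suc i) + \<rho> t i) = (\<rho> t (Suc i))^2 - (\<rho> t i)^2"
    by (simp add: power2_eq_square algebra_simps)
  also have "\<dots> = (\<sigma> (Suc i) + \<sigma> i) * (\<sigma> (Suc i) - \<sigma> i)"
    using assms(1) by (simp add: \<rho>_def power2_eq_square algebra_simps)
  finally show ?thesis
    using kappa_rho_sum[OF assms] rho_pos[OF assms(1), of i] rho_pos[OF assms(1), of "Suc i"] assms(2)
    by (simp add: \<kappa>_def field_simps)
qed

lemma P_Suc_fst:
  assumes "t \<ge> 0" "i \<le> m"
  shows "P t (Suc i) j = P t i j + \<kappa> t (Suc i) *\<^sub>R \<Delta> i j"
proof -
  have "P t (Suc i) j - P t i j = \<kappa> t (Suc i) *\<^sub>R (a (Suc i) - a i) + (\<rho> t (Suc i) - \<rho> t i) *\<^sub>R b j"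
    unfolding P_eq by (simp add: algebra_simps)
  also have "\<dots> = \<kappa> t (Suc i) *\<^sub>R \<Delta> i j"
    using rho_Suc_diff[OF assms] by (simp add: \<Delta>_def Tdelta_def scaleR_add_right)
  finally show ?thesis by (simp add: algebra_simps)
qed

lemma P_Suc_snd: "P t i (Suc j) = P t i j + \<rho> t i *\<^sub>R db j"
  unfolding P_eq by (simp add: db_def algebra_simps)

lemma P_0: "i \<le> Suc m \<Longrightarrow> P 0 i j = a i + \<sigma> i *\<^sub>R b j"
proof (induction i)
  case 0
  then show ?case using rho_0[of 0] by (simp add: P_eq)
next
  case (Suc i)
  have "\<kappa> 0 (Suc i) = 1"
    using Suc.prems sigma_pos[of i] sigma_pos[of "Suc i"] by (simp add: \<kappa>_def rho_0)
  then show ?case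
    using Suc P_Suc_fst[of 0 i j] by (simp add: \<Delta>_def Tdelta_def algebra_simps)
qed

lemma det_db_Delta_ne_0: "i \<le> m \<Longrightarrow> j \<le> n \<Longrightarrow> det3 e3 (db j) (\<Delta> i j) \<noteq> 0"
  using det_ne_0 by (simp add: db_def \<Delta>_def)

lemma Ft_eq_plane_pole: "Ft t i j = plane_pole (P t i j) (db j) (\<Delta> i j)"
  by (simp add: Ft_def Tpoint_eq_plane_pole db_def \<Delta>_def)

lemma F_eq_plane_pole: "i \<le> m \<Longrightarrow> j \<le> n \<Longrightarrow> F i j = plane_pole (P 0 i j) (db j) (\<Delta> i j)"
  by (simp add: F_eq P_0 Tpoint_eq_plane_pole db_def \<Delta>_def)

lemma Ft_0: "i \<le> m \<Longrightarrow> j \<le> n \<Longrightarrow> Ft 0 i j = F i j"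
  by (simp add: Ft_eq_plane_pole F_eq_plane_pole)

text \<open>The dual point of the face \<open>(i, j)\<close> of \<open>Ft t\<close> is \<open>P t (i+1) (j+1)\<close>, since it lies in the planes
  dual to the four vertices.\<close>

lemma P_face_corner:
  assumes "i < m" "t \<ge> 0" "k \<in> {i, Suc i}" "l \<in> {j, Suc j}"
  shows "\<exists>\<alpha> \<beta>. P t (Suc i) (Suc j) = P t k l + \<alpha> *\<^sub>R db l + \<beta> *\<^sub>R \<Delta> k l"
proof -
  have fst: "P t (Suc i) j' = P t i j' + \<kappa> t (Suc i) *\<^sub>R \<Delta> i j'" for j'
    using P_Suc_fst assms by simp
  consider "k = i" "l = j" | "k = i" "l = Suc j" | "k = Suc i" "l = j" | "k = Suc i" "l = Suc j"
    using assms by auto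
  then show ?thesis
  proof cases
    case 1
    then show ?thesis using fst[of "Suc j"] fst[of j] P_Suc_snd[of t "Suc i" j]
      by (intro exI[of _ "\<rho> t (Suc i)"] exI[of _ "\<kappa> t (Suc i)"]) (simp add: algebra_simps)
  next
    case 2
    then show ?thesis using fst[of "Suc j"] by (intro exI[of _ 0] exI[of _ "\<kappa> t (Suc i)"]) simp
  next
    case 3
    then show ?thesis using P_Suc_snd[of t "Suc i" j]
      by (intro exI[of _ "\<rho> t (Suc i)"] exI[of _ 0]) simp
  qed (intro exI[of _ 0] exI[of _ 0], simp)
qed

lemma Ft_in_dual_plane:
  assumes "i < m" "j < n" "t \<ge> 0" "k \<in> {i, Suc i}" "l \<in> {j, Suc j}"
  shows "Ft t k l \<in> dual_plane (P t (Suc i) (Suc j))"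
proof -
  obtain \<alpha> \<beta> where e: "P t (Suc i) (Suc j) = P t k l + \<alpha> *\<^sub>R db l + \<beta> *\<^sub>R \<Delta> k l"
    using P_face_corner[OF assms(1,3-5)] by blast
  have "k \<le> m" "l \<le> n" using assms by auto
  then show ?thesis
    unfolding mem_dual_plane e Ft_eq_plane_pole using plane_pole_in_dual_plane det_db_Delta_ne_0
      by blast
qed

lemma Ft_eq_shear:
  assumes "i < m" "j < n" "t \<ge> 0" "k \<in> {i, Suc i}" "l \<in> {j, Suc j}"
  shows "Ft t k l = shear (P t (Suc i) (Suc j) - P 0 (Suc i) (Suc j)) (F k l)"
proof -
  obtain \<alpha> \<beta> where e: "P t (Suc i) (Suc j) = P t k l + \<alpha> *\<^sub>R db l + \<beta> *\<^sub>R \<Delta> k l"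
    using P_face_corner[OF assms(1,3-5)] by blast
  obtain \<alpha>' \<beta>' where e': "P 0 (Suc i) (Suc j) = P 0 k l + \<alpha>' *\<^sub>R db l + \<beta>' *\<^sub>R \<Delta> k l"
    using P_face_corner[OF assms(1) _ assms(4,5)] by blast
  have kl: "k \<le> m" "l \<le> n" using assms by auto
  note det = det_db_Delta_ne_0[OF kl]
  have "dual_height (F k l) (db l) = 0" "dual_height (F k l) (\<Delta> k l) = 0"
    using plane_pole_directions[OF det] F_eq_plane_pole[OF kl] by simp_all
  then have "dual_height (F k l) (P t k l - P 0 k l)
      = dual_height (F k l) (P t (Suc i) (Suc j) - P 0 (Suc i) (Suc j))"
    unfolding e e' by (simp add: dual_height_add dual_height_diff dual_height_scaleR)
  moreover have "Ft t k l = F k l + dual_height (F k l) (P t k l - P 0 k l) *\<^sub>R e3"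
    unfolding Ft_eq_plane_pole F_eq_plane_pole[OF kl] by (rule plane_pole_shift[OF det])
  ultimately show ?thesis by (simp add: shear_def)
qed

lemma convex_quad_Ft:
  assumes "i < m" "j < n" "t \<ge> 0"
  shows "convex_quad (Ft t i j) (Ft t (Suc i) j) (Ft t (Suc i) (Suc j)) (Ft t i (Suc j))"
proof -
  have "convex_quad (F i j) (F (Suc i) j) (F (Suc i) (Suc j)) (F i (Suc j))"
    using net assms unfolding is_net_def by blast
  then show ?thesis using Ft_eq_shear[OF assms] convex_quad_shear by simp
qed

lemma face_dual_Ft:
  assumes "i < m" "j < n" "t \<ge> 0"
  shows "face_dual (Ft t) i j = P t (Suc i) (Suc j)"
proof -
  have "face_plane (Ft t) i j = dual_plane (P t (Suc i) (Suc j))"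
    unfolding face_plane_def using convex_quad_Ft[OF assms] Ft_in_dual_plane[OF assms]
    by (intro affine_hull_convex_quad) auto
  then show ?thesis by (simp add: face_dual_def)
qed

lemma curvature_Ft:
  assumes "0 < i" "i < m" "0 < j" "j < n" "t \<ge> 0"
  shows "curvature (Ft t) i j = (\<sigma> i + \<sigma> (Suc i)) / 2 * det2top (\<Delta> i j) (db j)"
proof -
  have duals: "face_dual (Ft t) (i-1) (j-1) = P t i j" "face_dual (Ft t) i (j-1) = P t (Suc i) j"
    "face_dual (Ft t) i j = P t (Suc i) (Suc j)" "face_dual (Ft t) (i-1) j = P t i (Suc j)"
    using face_dual_Ft[of "i-1" "j-1" t] face_dual_Ft[of i "j-1" t] face_dual_Ft[of i j t]
      face_dual_Ft[of "i-1" j t] assms by simp_all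
  have P_Suc_Suc: "P t (Suc i) (Suc j) = P t i j + \<kappa> t (Suc i) *\<^sub>R \<Delta> i j + \<rho> t (Suc i) *\<^sub>R db j"
    using P_Suc_snd[of t "Suc i" j] P_Suc_fst[of t i j] assms by simp
  have "curvature (Ft t) i j = \<kappa> t (Suc i) * (\<rho> t i + \<rho> t (Suc i)) * det2top (\<Delta> i j) (db j) / 2"
    unfolding curvature_def Let_def duals P_Suc_Suc P_Suc_fst[OF assms(5) less_imp_le[OF assms(2)]]
      P_Suc_snd det2top_shoelace_trapezoid ..
  then show ?thesis using kappa_rho_sum[of t i] assms by simp
qed

lemma curvature_Ft_eq:
  assumes "0 < i" "i < m" "0 < j" "j < n" "t \<ge> 0"
  shows "curvature (Ft t) i j = curvature F i j"
proof -
  have "face_dual F i' j' = face_dual (Ft 0) i' j'" if "i' < m" "j' < n" for i' j'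
    using that by (simp add: face_dual_def face_plane_def Ft_0)
  then have "curvature F i j = curvature (Ft 0) i j"
    using assms by (simp add: curvature_def Let_def)
  then show ?thesis using curvature_Ft[OF assms] curvature_Ft[OF assms(1-4), of 0] by simp
qed

lemma continuous_on_Ft:
  assumes "i \<le> m" "j \<le> n"
  shows "continuous_on {0..1} (\<lambda>t. Ft t i j)"
proof -
  have "\<rho> t k + \<rho> t (k-1) \<noteq> 0" if "t \<in> {0..1}" "k \<in> {1..i}" for t k
    using rho_pos[of t k] rho_pos[of t "k-1"] that assms by force
  then have "continuous_on {0..1} (\<lambda>t. P t i j)"
    unfolding P_eq \<kappa>_def \<rho>_def by (intro continuous_intros) auto
  moreover have Ft: "Ft t i j = F i j + dual_height (F i j) (P t i j - P 0 i j) *\<^sub>R e3" for t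
    unfolding Ft_eq_plane_pole F_eq_plane_pole[OF assms]
      by (rule plane_pole_shift[OF det_db_Delta_ne_0[OF assms]])
  ultimately show ?thesis unfolding Ft dual_height_def by (intro continuous_intros) auto
qed

lemma is_net_Ft: "t \<ge> 0 \<Longrightarrow> is_net (Ft t) m n"
  unfolding is_net_def using convex_quad_Ft by blast

lemma iso_congruent_faces_Ft:
  assumes "i < m" "j < n" "t \<ge> 0"
  shows "\<exists>C. iso_congruence C \<and> C (F i j) = Ft t i j \<and> C (F (Suc i) j) = Ft t (Suc i) j \<and>
    C (F (Suc i) (Suc j)) = Ft t (Suc i) (Suc j) \<and> C (F i (Suc j)) = Ft t i (Suc j)"
  using Ft_eq_shear[OF assms] iso_congruence_shear
  by (intro exI[of _ "shear (P t (Suc i) (Suc j) - P 0 (Suc i) (Suc j))"]) auto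

lemma iso_isometric_deformation_Ft: "iso_isometric_deformation F m n 1 Ft"
  unfolding iso_isometric_deformation_def
  using continuous_on_Ft Ft_0 is_net_Ft iso_congruent_faces_Ft curvature_Ft_eq by auto

text \<open>The faces \<open>(0, 0)\<close> and \<open>(0, 1)\<close> are sheared by different vectors, because \<open>\<rho> t 1\<close> grows
  with \<open>t\<close>; a single isotropic congruence cannot realize both shears.\<close>

lemma nontrivial_deformation_Ft: "nontrivial_deformation F m n 1 Ft"
  unfolding nontrivial_deformation_def
proof
  assume "\<forall>t\<in>{0..1}. \<exists>C. iso_congruence C \<and> (\<forall>i\<le>m. \<forall>j\<le>n. Ft t i j = C (F i j))"
  then obtain C where C: "iso_congruence C" "\<And>i j. i \<le> m \<Longrightarrow> j \<le> n \<Longrightarrow> Ft 1 i j = C (F i j)" by force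
  define w where "w j = P 1 (Suc 0) (Suc j) - P 0 (Suc 0) (Suc j)" for j
  have C_eq_shear: "C = shear (w j)" if "j < 2" for j
  proof (rule iso_congruence_eq_shear[OF C(1)])
    have j: "j < n" using that n_gt_1 by simp
    have in_plane: "F k l \<in> dual_plane (P 0 (Suc 0) (Suc j))" if "k \<in> {0, Suc 0}" "l \<in> {j, Suc j}" for k l
    proof -
      have "k \<le> m" "l \<le> n" using that m_pos j by auto
      then show ?thesis using Ft_in_dual_plane[OF m_pos j order_refl that] Ft_0 by simp
    qed
    have "convex_quad (F 0 j) (F 1 j) (F 1 (Suc j)) (F 0 (Suc j))"
      using net m_pos j unfolding is_net_def by simp
    then have "\<not> collinear {F 0 j, F 1 j, F 1 (Suc j)}" by (rule convex_quad_not_collinear)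
    then show "det2top (F 1 j - F 0 j) (F 1 (Suc j) - F 0 j) \<noteq> 0"
      using det2top_ne_0_if_not_collinear[OF in_plane in_plane in_plane] by simp
    have "C (F k l) = shear (w j) (F k l)" if "k \<in> {0, Suc 0}" "l \<in> {j, Suc j}" for k l
    proof -
      have "k \<le> m" "l \<le> n" using that m_pos j by auto
      then show ?thesis using C(2) Ft_eq_shear[OF m_pos j _ that, of 1] by (simp add: w_def)
    qed
    then show "C (F 0 j) = shear (w j) (F 0 j)" "C (F 1 j) = shear (w j) (F 1 j)"
      "C (F 1 (Suc j)) = shear (w j) (F 1 (Suc j))" by simp_all
  qed
  have "w 1 - w 0 = (\<rho> 1 1 - \<rho> 0 1) *\<^sub>R db 1"
    unfolding w_def using P_Suc_snd[of 1 1 1] P_Suc_snd[of 0 1 1] by (simp add: algebra_simps)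
  moreover have "\<sigma> 1 > 0" using sigma_pos[of 1] by simp
  then have "\<sigma> 1 < \<rho> 1 1" unfolding \<rho>_def
    by (metis abs_of_pos less_add_same_cancel2 real_sqrt_abs real_sqrt_less_iff zero_less_one)
  then have "\<rho> 1 1 \<noteq> \<rho> 0 1" using rho_0[of 1] by simp
  moreover have "db 1 \<noteq> 0" using det_db_Delta_ne_0[of 0 1] n_gt_1 by (auto simp: det3_eq)
  moreover have "w 0 = w 1" using C_eq_shear[of 0] C_eq_shear[of 1] shear_inject by simp
  ultimately show False by simp
qed

lemma T_representation: "T_representation F m n"
proof -
  have Ft: "Ft = (\<lambda>t i j. Tpoint a b \<sigma> (Tpath a b \<sigma> t i j) i j)"
    by (simp add: fun_eq_iff Ft_def P_def)
  have "\<forall>k\<le>Suc m. 0 < \<sigma> k" using sigma_pos by simp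
  moreover have "\<forall>i\<le>m. \<forall>j\<le>n. det3 e3 (b (Suc j) - b j) (Tdelta a b \<sigma> i j) \<noteq> 0 \<and>
      F i j = Tpoint a b \<sigma> (a i + \<sigma> i *\<^sub>R b j) i j" using det_ne_0 F_eq by simp
  moreover note iso_isometric_deformation_Ft[unfolded Ft] nontrivial_deformation_Ft[unfolded Ft]
  ultimately show ?thesis unfolding T_representation_def using zero_less_one by blast
qed

end

section \<open>Dual convexity\<close>

lemma affine_hull_3_eq_hyperplane:
  fixes A B C :: point
  assumes "\<not> collinear {A, B, C}"
  shows "\<exists>a c. a \<noteq> 0 \<and> affine hull {A, B, C} = {x. a \<bullet> x = c}"
proof -
  have "aff_dim {A, B, C} > 1" using assms by (simp add: collinear_aff_dim)
  moreover have "card {A, B, C} \<le> 3" by (simp add: card_insert_if)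
  then have "aff_dim {A, B, C} \<le> 2" using aff_dim_le_card[of "{A, B, C}"] by simp
  ultimately have "aff_dim {A, B, C} = 2" by linarith
  then show ?thesis using aff_dim_eq_hyperplane[of "{A, B, C}"] by simp
qed

text \<open>\<open>Q3\<close> and \<open>Q4\<close> lie on the same side of any plane through \<open>Q1\<close> and \<open>Q2\<close>, because the diagonals
  cross.\<close>

lemma convex_quad_same_side:
  assumes "convex_quad Q1 Q2 Q3 Q4" "a \<bullet> Q1 = c" "a \<bullet> Q2 = c"
  shows "\<exists>\<alpha> \<beta>. 0 < \<alpha> \<and> 0 < \<beta> \<and> \<alpha> * (a \<bullet> Q3 - c) = \<beta> * (a \<bullet> Q4 - c)"
proof -
  from assms(1) obtain X where "X \<in> open_segment Q1 Q3" "X \<in> open_segment Q2 Q4"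
    unfolding convex_quad_def by blast
  then obtain \<alpha> \<beta> where \<alpha>: "0 < \<alpha>" "X = (1 - \<alpha>) *\<^sub>R Q1 + \<alpha> *\<^sub>R Q3"
    and \<beta>: "0 < \<beta>" "X = (1 - \<beta>) *\<^sub>R Q2 + \<beta> *\<^sub>R Q4"
    by (auto simp: in_segment)
  have "a \<bullet> X = (1 - \<alpha>) * (a \<bullet> Q1) + \<alpha> * (a \<bullet> Q3)"
    unfolding \<alpha>(2) by (simp add: inner_add_right)
  moreover have "a \<bullet> X = (1 - \<beta>) * (a \<bullet> Q2) + \<beta> * (a \<bullet> Q4)"
    unfolding \<beta>(2) by (simp add: inner_add_right)
  ultimately
  have "a \<bullet> X - c = \<alpha> * (a \<bullet> Q3 - c)" "a \<bullet> X - c = \<beta> * (a \<bullet> Q4 - c)"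
    using assms(2,3) by (simp_all add: algebra_simps)
  then show ?thesis using \<alpha>(1) \<beta>(1) by (intro exI[of _ \<alpha>] exI[of _ \<beta>]) simp
qed

lemma flat_angle_plane_oriented:
  assumes cq: "convex_quad Q1 Q2 Q3 Q4" and V: "V \<notin> affine hull {Q1, Q2, Q3, Q4}"
  shows "\<exists>a c. a \<noteq> 0 \<and> affine hull {V, Q1, Q2} = {x. a \<bullet> x = c} \<and> a \<bullet> Q3 > c \<and> a \<bullet> Q4 > c"
proof -
  have "Q1 \<noteq> Q2" using convex_quad_not_collinear[OF cq] by auto
  have "\<not> collinear {V, Q1, Q2}"
  proof
    assume "collinear {V, Q1, Q2}"
    then have "V \<in> affine hull {Q1, Q2}"
      using collinear_3_affine_hull[OF \<open>Q1 \<noteq> Q2\<close>] by (simp add: insert_commute)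
    moreover have "affine hull {Q1, Q2} \<subseteq> affine hull {Q1, Q2, Q3, Q4}" by (intro hull_mono) auto
    ultimately show False using V by blast
  qed
  then obtain a c where a: "a \<noteq> 0" and H: "affine hull {V, Q1, Q2} = {x. a \<bullet> x = c}"
    using affine_hull_3_eq_hyperplane by blast
  have in_H: "a \<bullet> V = c" "a \<bullet> Q1 = c" "a \<bullet> Q2 = c"
    using H hull_inc[of _ "{V, Q1, Q2}"] by auto
  obtain \<alpha> \<beta> where \<alpha>\<beta>: "0 < \<alpha>" "0 < \<beta>" "\<alpha> * (a \<bullet> Q3 - c) = \<beta> * (a \<bullet> Q4 - c)"
    using convex_quad_same_side[OF cq in_H(2,3)] by blast
  have "a \<bullet> Q3 \<noteq> c"
  proof
    assume "a \<bullet> Q3 = c"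
    moreover from this have "a \<bullet> Q4 = c" using \<alpha>\<beta> by simp
    ultimately have "affine hull {Q1, Q2, Q3, Q4} = {x. a \<bullet> x = c}"
      using affine_hull_convex_quad_eq_hyperplane[OF cq a] in_H by simp
    then show False using V in_H by auto
  qed
  then consider "a \<bullet> Q3 > c" | "a \<bullet> Q3 < c" by linarith
  then show ?thesis
  proof cases
    case 1
    then have "0 < \<alpha> * (a \<bullet> Q3 - c)" using \<alpha>\<beta>(1) by simp
    then have "0 < \<beta> * (a \<bullet> Q4 - c)" using \<alpha>\<beta>(3) by simp
    then have "a \<bullet> Q4 > c" using \<alpha>\<beta>(2) by (simp add: zero_less_mult_iff)
    then show ?thesis using a H 1 by blast
  next
    case 2
    then have "\<alpha> * (a \<bullet> Q3 - c) < 0" using \<alpha>\<beta>(1) by (simp add: mult_pos_neg)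
    then have "\<beta> * (a \<bullet> Q4 - c) < 0" using \<alpha>\<beta>(3) by simp
    then have "a \<bullet> Q4 < c" using \<alpha>\<beta>(2) by (simp add: mult_less_0_iff)
    moreover have "affine hull {V, Q1, Q2} = {x. (- a) \<bullet> x = - c}" using H by simp
    ultimately show ?thesis using a 2 by (intro exI[of _ "- a"] exI[of _ "- c"]) simp
  qed
qed

lemma hedral_angle_subset_halfspace:
  assumes "a \<bullet> V = c" "\<And>q. q \<in> {Q1, Q2, Q3, Q4} \<Longrightarrow> a \<bullet> q \<ge> c"
  shows "hedral_angle V Q1 Q2 Q3 Q4 \<subseteq> {x. a \<bullet> x \<ge> c}"
proof
  fix y assume "y \<in> hedral_angle V Q1 Q2 Q3 Q4"
  then obtain t q where y: "y = V + t *\<^sub>R (q - V)" "t \<ge> 0" "q \<in> convex hull {Q1, Q2, Q3, Q4}"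
    unfolding hedral_angle_def by blast
  have "convex hull {Q1, Q2, Q3, Q4} \<subseteq> {x. a \<bullet> x \<ge> c}"
    using assms(2) by (intro hull_minimal) (auto simp: convex_halfspace_ge)
  then have "a \<bullet> q \<ge> c" using y(3) by auto
  moreover have "a \<bullet> y = c + t * (a \<bullet> q - c)"
    using y(1) assms(1) by (simp add: inner_add_right inner_diff_right)
  ultimately show "y \<in> {x. a \<bullet> x \<ge> c}" using y(2) by simp
qed

text \<open>\<open>vertical_gap D x\<close> is positive iff \<open>x\<close> lies below the plane \<open>D\<^sup>*\<close>.\<close>

definition vertical_gap :: "point \<Rightarrow> point \<Rightarrow> real" where
  "vertical_gap D x = dual_height x D - x$3"

lemma vertical_gap_eq_0_iff: "vertical_gap D x = 0 \<longleftrightarrow> x \<in> dual_plane D"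
  by (simp add: vertical_gap_def mem_dual_plane)

lemma vertical_gap_diff: "vertical_gap D x - vertical_gap D' x = dual_height x (D - D')"
  by (simp add: vertical_gap_def dual_height_diff)

lemma hyperplane_eq_dual_plane:
  fixes a :: point
  assumes "a$3 \<noteq> 0" "D = vector [- a$1 / a$3, - a$2 / a$3, - c / a$3]"
  shows "vertical_gap D x = - (a \<bullet> x - c) / a$3" and "{x. a \<bullet> x = c} = dual_plane D"
proof -
  show gap: "vertical_gap D x = - (a \<bullet> x - c) / a$3" for x
    using assms by (simp add: vertical_gap_def dual_height_def inner_point_eq field_simps)
  have "vertical_gap D x = 0 \<longleftrightarrow> c - a \<bullet> x = 0" for x
    using gap[of x] assms(1) by simp
  then show "{x. a \<bullet> x = c} = dual_plane D" by (auto simp: vertical_gap_eq_0_iff)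
qed

text \<open>An admissible angle lies on one side of the plane of each of its flat angles, the side containing
  its isotropic axis; so the two remaining edges are on the side of the axis.\<close>

lemma flat_angle_dual:
  assumes adm: "admissible_angle V Q1 Q2 Q3 Q4"
    and s: "V + s *\<^sub>R e3 \<in> interior (hedral_angle V Q1 Q2 Q3 Q4)"
  shows "\<exists>D. affine hull {V, Q1, Q2} = dual_plane D \<and>
    s * vertical_gap D Q3 < 0 \<and> s * vertical_gap D Q4 < 0"
proof -
  have "convex_quad Q1 Q2 Q3 Q4 \<and> V \<notin> affine hull {Q1, Q2, Q3, Q4}"
    using adm unfolding admissible_angle_def by (elim conjE) (intro conjI)
  then obtain a c where a: "a \<noteq> 0" and H: "affine hull {V, Q1, Q2} = {x. a \<bullet> x = c}"
    and Q34: "a \<bullet> Q3 > c" "a \<bullet> Q4 > c"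
    using flat_angle_plane_oriented[of Q1 Q2 Q3 Q4 V] by blast
  have in_H: "a \<bullet> V = c" "a \<bullet> Q1 = c" "a \<bullet> Q2 = c"
    using H hull_inc[of _ "{V, Q1, Q2}"] by auto
  have "hedral_angle V Q1 Q2 Q3 Q4 \<subseteq> {x. a \<bullet> x \<ge> c}"
    using in_H Q34 by (intro hedral_angle_subset_halfspace) auto
  then have "V + s *\<^sub>R e3 \<in> interior {x. a \<bullet> x \<ge> c}" using interior_mono s by blast
  then have "a \<bullet> (V + s *\<^sub>R e3) > c" using a by simp
  moreover have "a \<bullet> (V + s *\<^sub>R e3) = a \<bullet> V + s * a$3"
    by (simp add: inner_add_right inner_point_eq algebra_simps)
  ultimately have sa: "s * a$3 > 0" using in_H by simp
  then have a3: "a$3 \<noteq> 0" by auto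
  have pos: "s / a$3 > 0" using sa by (simp add: zero_less_divide_iff zero_less_mult_iff)
  define D :: point where "D = vector [- a$1 / a$3, - a$2 / a$3, - c / a$3]"
  note D = hyperplane_eq_dual_plane[OF a3 D_def]
  have "s * vertical_gap D Q < 0" if "a \<bullet> Q > c" for Q
  proof -
    have "s * vertical_gap D Q = (s / a$3) * (c - a \<bullet> Q)" by (simp add: D(1))
    then show ?thesis using mult_pos_neg[OF pos, of "c - a \<bullet> Q"] that by simp
  qed
  moreover have "affine hull {V, Q1, Q2} = dual_plane D" using H D(2) by simp
  ultimately show ?thesis using Q34 by blast
qed

lemma hedral_angle_rotate: "hedral_angle V Q2 Q3 Q4 Q1 = hedral_angle V Q1 Q2 Q3 Q4"
proof -
  have "{Q2, Q3, Q4, Q1} = {Q1, Q2, Q3, Q4}" by auto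
  then show ?thesis unfolding hedral_angle_def by simp
qed

lemma admissible_angle_rotate:
  assumes "admissible_angle V Q1 Q2 Q3 Q4"
  shows "admissible_angle V Q2 Q3 Q4 Q1"
proof -
  have "{Q2, Q3, Q4, Q1} = {Q1, Q2, Q3, Q4}" by auto
  then show ?thesis
    using assms convex_quad_rotate[of Q1 Q2 Q3 Q4] hedral_angle_rotate[of V Q2 Q3 Q4 Q1]
    unfolding admissible_angle_def by simp
qed

definition admissible_dual_quad :: "point \<Rightarrow> point \<Rightarrow> point \<Rightarrow> point \<Rightarrow> bool" where
  "admissible_dual_quad D1 D2 D3 D4 \<longleftrightarrow>
     (\<forall>\<mu>. D4 - D1 = \<mu> *\<^sub>R (D3 - D2) \<longrightarrow> \<mu> > 0) \<and> lin_indep (D2 - D1) (D4 - D1) \<and>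
     D1 \<noteq> D2 \<and> D2 \<noteq> D3 \<and> D3 \<noteq> D4 \<and> D4 \<noteq> D1"

lemma admissible_dual_quad_if_separated:
  assumes on: "Q1 \<in> dual_plane D1" "Q2 \<in> dual_plane D1" "Q2 \<in> dual_plane D2" "Q3 \<in> dual_plane D2"
    "Q3 \<in> dual_plane D3" "Q4 \<in> dual_plane D3" "Q4 \<in> dual_plane D4" "Q1 \<in> dual_plane D4"
    and off: "s * vertical_gap D2 Q1 < 0" "s * vertical_gap D3 Q2 < 0" "s * vertical_gap D4 Q2 < 0"
    "s * vertical_gap D4 Q3 < 0"
  shows "admissible_dual_quad D1 D2 D3 D4"
proof -
  have gap: "vertical_gap D1 Q1 = 0" "vertical_gap D1 Q2 = 0" "vertical_gap D2 Q2 = 0" "vertical_gap D2 Q3 = 0"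
    "vertical_gap D3 Q3 = 0" "vertical_gap D3 Q4 = 0" "vertical_gap D4 Q4 = 0" "vertical_gap D4 Q1 = 0"
    using on by (simp_all add: vertical_gap_eq_0_iff)
  have ne: "vertical_gap D2 Q1 \<noteq> 0" "vertical_gap D3 Q2 \<noteq> 0" "vertical_gap D4 Q2 \<noteq> 0"
    "vertical_gap D4 Q3 \<noteq> 0" using off by auto
  have "\<mu> > 0" if "D4 - D1 = \<mu> *\<^sub>R (D3 - D2)" for \<mu>
  proof (rule ccontr)
    have "vertical_gap D4 Q2 = \<mu> * vertical_gap D3 Q2"
      using arg_cong[OF that, of "dual_height Q2"] gap vertical_gap_diff[of D4 Q2 D1] vertical_gap_diff[of D3 Q2 D2]
      by (simp add: dual_height_scaleR)
    moreover assume "\<not> \<mu> > 0"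
    then have "\<mu> * (s * vertical_gap D3 Q2) \<ge> 0" using off(2) by (simp add: mult_nonpos_nonpos)
    ultimately show False using off(3) by (simp add: algebra_simps)
  qed
  moreover have "lin_indep (D2 - D1) (D4 - D1)"
    unfolding lin_indep_def
  proof (intro allI impI)
    fix \<alpha> \<beta> assume comb: "\<alpha> *\<^sub>R (D2 - D1) + \<beta> *\<^sub>R (D4 - D1) = 0"
    have h: "\<alpha> * (vertical_gap D2 Q - vertical_gap D1 Q) + \<beta> * (vertical_gap D4 Q - vertical_gap D1 Q) = 0" for Q
      using arg_cong[OF comb, of "dual_height Q"]
        by (simp add: vertical_gap_diff dual_height_add dual_height_scaleR)
    have "\<beta> = 0" using h[of Q2] gap ne by simp
    moreover have "\<alpha> = 0" using h[of Q1] gap ne calculation by simp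
    ultimately show "\<alpha> = 0 \<and> \<beta> = 0" by simp
  qed
  moreover have "D1 \<noteq> D2" "D2 \<noteq> D3" "D3 \<noteq> D4" "D4 \<noteq> D1"
    using gap(1,3,5,2) ne(1,2,4,3) by auto
  ultimately show ?thesis unfolding admissible_dual_quad_def by blast
qed

lemma admissible_angle_face_duals:
  assumes adm: "admissible_angle V Q1 Q2 Q3 Q4"
  shows "\<exists>D1 D2 D3 D4. affine hull {V, Q1, Q2} = dual_plane D1 \<and> affine hull {V, Q2, Q3} = dual_plane D2 \<and>
    affine hull {V, Q3, Q4} = dual_plane D3 \<and> affine hull {V, Q4, Q1} = dual_plane D4 \<and>
    admissible_dual_quad D1 D2 D3 D4"
proof -
  obtain s where s: "V + s *\<^sub>R e3 \<in> interior (hedral_angle V Q1 Q2 Q3 Q4)"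
    using adm unfolding admissible_angle_def by blast
  have adm1: "admissible_angle V Q2 Q3 Q4 Q1" using admissible_angle_rotate[OF adm] .
  have adm2: "admissible_angle V Q3 Q4 Q1 Q2" using admissible_angle_rotate[OF adm1] .
  have adm3: "admissible_angle V Q4 Q1 Q2 Q3" using admissible_angle_rotate[OF adm2] .
  have s1: "V + s *\<^sub>R e3 \<in> interior (hedral_angle V Q2 Q3 Q4 Q1)"
    unfolding hedral_angle_rotate[of V Q2 Q3 Q4 Q1] by (rule s)
  have s2: "V + s *\<^sub>R e3 \<in> interior (hedral_angle V Q3 Q4 Q1 Q2)"
    unfolding hedral_angle_rotate[of V Q3 Q4 Q1 Q2] by (rule s1)
  have s3: "V + s *\<^sub>R e3 \<in> interior (hedral_angle V Q4 Q1 Q2 Q3)"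
    unfolding hedral_angle_rotate[of V Q4 Q1 Q2 Q3] by (rule s2)
  obtain D1 where D1: "affine hull {V, Q1, Q2} = dual_plane D1"
    using flat_angle_dual[OF adm s] by blast
  obtain D2 where D2: "affine hull {V, Q2, Q3} = dual_plane D2" "s * vertical_gap D2 Q1 < 0"
    using flat_angle_dual[OF adm1 s1] by blast
  obtain D3 where D3: "affine hull {V, Q3, Q4} = dual_plane D3" "s * vertical_gap D3 Q2 < 0"
    using flat_angle_dual[OF adm2 s2] by blast
  obtain D4 where D4: "affine hull {V, Q4, Q1} = dual_plane D4" "s * vertical_gap D4 Q2 < 0"
    "s * vertical_gap D4 Q3 < 0"
    using flat_angle_dual[OF adm3 s3] by blast
  have "admissible_dual_quad D1 D2 D3 D4"
    using D1 D2 D3 D4 hull_inc[of _ "{V, Q1, Q2}"] hull_inc[of _ "{V, Q2, Q3}"]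
      hull_inc[of _ "{V, Q3, Q4}"] hull_inc[of _ "{V, Q4, Q1}"]
    by (intro admissible_dual_quad_if_separated[of Q1 D1 Q2 D2 Q3 D3 Q4 D4 s]) auto
  then show ?thesis using D1 D2 D3 D4 by blast
qed

lemma inner_vertex_face_duals:
  assumes dc: "dual_convex F m n" and ij: "0 < i" "i < m" "0 < j" "j < n"
  shows "face_plane F (i-1) (j-1) = dual_plane (face_dual F (i-1) (j-1)) \<and>
    face_plane F i (j-1) = dual_plane (face_dual F i (j-1)) \<and>
    face_plane F i j = dual_plane (face_dual F i j) \<and>
    face_plane F (i-1) j = dual_plane (face_dual F (i-1) j) \<and>
    admissible_dual_quad (face_dual F (i-1) (j-1)) (face_dual F i (j-1)) (face_dual F i j) (face_dual F (i-1) j)"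
proof -
  obtain V Q1 Q2 Q3 Q4 where w: "admissible_angle V Q1 Q2 Q3 Q4"
      "face_plane F (i-1) (j-1) = affine hull {V, Q1, Q2}" "face_plane F i (j-1) = affine hull {V, Q2, Q3}"
      "face_plane F i j = affine hull {V, Q3, Q4}" "face_plane F (i-1) j = affine hull {V, Q4, Q1}"
    using dc ij unfolding dual_convex_def by blast
  obtain D1 D2 D3 D4 where D: "affine hull {V, Q1, Q2} = dual_plane D1" "affine hull {V, Q2, Q3} = dual_plane D2"
      "affine hull {V, Q3, Q4} = dual_plane D3" "affine hull {V, Q4, Q1} = dual_plane D4" "admissible_dual_quad D1 D2 D3 D4"
    using admissible_angle_face_duals[OF w(1)] by blast
  have fd: "face_dual F (i-1) (j-1) = D1" "face_dual F i (j-1) = D2" "face_dual F i j = D3" "face_dual F (i-1) j = D4"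
    unfolding face_dual_def w(2-5) D(1-4) plane_dual_dual_plane by simp_all
  show ?thesis unfolding fd w(2-5) D(1-4) using D(5) by simp
qed

lemma face_plane_eq_dual_plane:
  assumes dc: "dual_convex F m n" and ij: "i < m" "j < n"
  shows "face_plane F i j = dual_plane (face_dual F i j)"
proof -
  have dims: "2 \<le> m" "2 \<le> n" using dc unfolding dual_convex_def by simp_all
  define i' where "i' = (if Suc i < m then Suc i else i)"
  define j' where "j' = (if Suc j < n then Suc j else j)"
  have i': "0 < i'" "i' < m" "i = i' - 1 \<or> i = i'" using ij dims by (auto simp: i'_def)
  have j': "0 < j'" "j' < n" "j = j' - 1 \<or> j = j'" using ij dims by (auto simp: j'_def)
  show ?thesis
    using i'(3) j'(3) inner_vertex_face_duals[OF dc i'(1,2) j'(1,2)] by (elim disjE) simp_all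
qed

section \<open>From a generalized T-net to its parametrization\<close>

lemma isotropic_plane_dual_direction:
  assumes "lies_in_isotropic_plane S"
  shows "\<exists>d. d \<noteq> 0 \<and> (\<forall>x\<in>S. dual_height x d = 0)"
proof -
  obtain a c where a: "a \<noteq> 0" "a$3 = 0" "S \<subseteq> {x. a \<bullet> x = c}"
    using assms unfolding lies_in_isotropic_plane_def by blast
  have "vector [a$1, a$2, c] \<noteq> (0::point)" using a(1,2) by (auto simp: vec_eq_iff forall_3)
  moreover have "dual_height x (vector [a$1, a$2, c]) = 0" if "x \<in> S" for x
    using a(2,3) that by (auto simp: dual_height_def inner_point_eq algebra_simps)
  ultimately show ?thesis by blast
qed

lemma plane_dual_data:
  assumes "lies_in_plane S"
  shows "\<exists>Y \<omega>. (Y \<noteq> 0 \<or> \<omega> \<noteq> 0) \<and> (\<forall>x\<in>S. dual_height x Y = \<omega> * x$3)"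
proof -
  obtain a c where a: "a \<noteq> 0" "S \<subseteq> {x. a \<bullet> x = c}"
    using assms unfolding lies_in_plane_def by blast
  have "vector [- a$1, - a$2, - c] \<noteq> (0::point) \<or> a$3 \<noteq> 0" using a(1)
    by (auto simp: vec_eq_iff forall_3)
  moreover have "dual_height x (vector [- a$1, - a$2, - c]) = a$3 * x$3" if "x \<in> S" for x
    using a(2) that by (auto simp: dual_height_def inner_point_eq algebra_simps)
  ultimately show ?thesis by blast
qed

locale isotropic_columns_T_net =
  fixes F :: "nat \<Rightarrow> nat \<Rightarrow> point" and m n :: nat and D :: "nat \<Rightarrow> nat \<Rightarrow> point"
  assumes dims_ge_2: "2 \<le> m" "2 \<le> n"
    and net: "is_net F m n"
    and face_in_dual_plane: "\<And>i j. i < m \<Longrightarrow> j < n \<Longrightarrow>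
      F i j \<in> dual_plane (D i j) \<and> F (Suc i) j \<in> dual_plane (D i j) \<and>
      F (Suc i) (Suc j) \<in> dual_plane (D i j) \<and> F i (Suc j) \<in> dual_plane (D i j)"
    and inner_vertex: "\<And>i j. 0 < i \<Longrightarrow> i < m \<Longrightarrow> 0 < j \<Longrightarrow> j < n \<Longrightarrow>
      admissible_dual_quad (D (i-1) (j-1)) (D i (j-1)) (D i j) (D (i-1) j)"
    and isotropic_column: "\<And>j. j \<le> n \<Longrightarrow> \<exists>d. d \<noteq> 0 \<and> (\<forall>i\<le>m. dual_height (F i j) d = 0)"
    and planar_row: "\<And>i. i \<le> m \<Longrightarrow>
      \<exists>Y \<omega>. (Y \<noteq> 0 \<or> \<omega> \<noteq> 0) \<and> (\<forall>j\<le>n. dual_height (F i j) Y = \<omega> * F i j $ 3)"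
begin

lemma face_convex:
  "i < m \<Longrightarrow> j < n \<Longrightarrow> convex_quad (F i j) (F (Suc i) j) (F (Suc i) (Suc j)) (F i (Suc j))"
  using net unfolding is_net_def by blast

lemma dual_height_face_vertex:
  "i < m \<Longrightarrow> j < n \<Longrightarrow> p \<le> 1 \<Longrightarrow> q \<le> 1 \<Longrightarrow>
    dual_height (F (i+p) (j+q)) (D i j) = F (i+p) (j+q) $ 3"
  using face_in_dual_plane[of i j] by (auto simp: mem_dual_plane le_Suc_eq)

lemma face_not_collinear:
  assumes "i < m" "j < n"
  shows "\<not> collinear {F i j, F (Suc i) j, F (Suc i) (Suc j)}"
    "\<not> collinear {F (Suc i) j, F (Suc i) (Suc j), F i (Suc j)}"
    "\<not> collinear {F (Suc i) (Suc j), F i (Suc j), F i j}"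
    "\<not> collinear {F i (Suc j), F i j, F (Suc i) j}"
proof -
  note q = face_convex[OF assms] and rot = convex_quad_rotate
  show "\<not> collinear {F i j, F (Suc i) j, F (Suc i) (Suc j)}"
    "\<not> collinear {F (Suc i) j, F (Suc i) (Suc j), F i (Suc j)}"
    "\<not> collinear {F (Suc i) (Suc j), F i (Suc j), F i j}"
    "\<not> collinear {F i (Suc j), F i j, F (Suc i) j}"
    using convex_quad_not_collinear[OF q] convex_quad_not_collinear[OF rot[OF q]]
      convex_quad_not_collinear[OF rot[OF rot[OF q]]] convex_quad_not_collinear[OF rot[OF rot[OF rot[OF q]]]]
    by auto
qed

lemma eq_0_if_annihilated_by_face:
  assumes ij: "i < m" "j < n" and pq: "p0 \<le> 1" "q0 \<le> 1"
    and z: "\<And>p q. p \<le> 1 \<Longrightarrow> q \<le> 1 \<Longrightarrow> (p, q) \<noteq> (p0, q0) \<Longrightarrow> dual_height (F (i+p) (j+q)) z = 0"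
  shows "z = 0"
proof -
  have g: "F i j \<in> dual_plane (D i j)" "F (Suc i) j \<in> dual_plane (D i j)"
    "F (Suc i) (Suc j) \<in> dual_plane (D i j)" "F i (Suc j) \<in> dual_plane (D i j)"
    using face_in_dual_plane[OF ij] by auto
  note nc = face_not_collinear[OF ij]
  have z00: "(0,0) \<noteq> (p0,q0) \<Longrightarrow> dual_height (F i j) z = 0" using z[of 0 0] by simp
  have z10: "(1,0) \<noteq> (p0,q0) \<Longrightarrow> dual_height (F (Suc i) j) z = 0" using z[of 1 0] by simp
  have z11: "(1,1) \<noteq> (p0,q0) \<Longrightarrow> dual_height (F (Suc i) (Suc j)) z = 0" using z[of 1 1] by simp
  have z01: "(0,1) \<noteq> (p0,q0) \<Longrightarrow> dual_height (F i (Suc j)) z = 0" using z[of 0 1] by simp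
  consider "(p0,q0) = (0,0)" | "(p0,q0) = (1,0)" | "(p0,q0) = (1,1)" | "(p0,q0) = (0,1)"
    using pq by (auto simp: le_Suc_eq)
  then show ?thesis
  proof cases
    case 1
    then show ?thesis
      using dual_height_eq_0_imp_eq_0[OF z10 z11 z01 det2top_ne_0_if_not_collinear[OF g(2,3,4) nc(2)]]
      by auto
  next
    case 2
    then show ?thesis
      using dual_height_eq_0_imp_eq_0[OF z11 z01 z00 det2top_ne_0_if_not_collinear[OF g(3,4,1) nc(3)]]
      by auto
  next
    case 3
    then show ?thesis
      using dual_height_eq_0_imp_eq_0[OF z01 z00 z10 det2top_ne_0_if_not_collinear[OF g(4,1,2) nc(4)]]
      by auto
  next
    case 4
    then show ?thesis
      using dual_height_eq_0_imp_eq_0[OF z00 z10 z11 det2top_ne_0_if_not_collinear[OF g(1,2,3) nc(1)]]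
      by auto
  qed
qed

lemma inner_vertex_duals: "0 < i \<Longrightarrow> i < m \<Longrightarrow> 0 < j \<Longrightarrow> j < n \<Longrightarrow>
  (\<forall>\<mu>. D (i-1) j - D (i-1) (j-1) = \<mu> *\<^sub>R (D i j - D i (j-1)) \<longrightarrow> \<mu> > 0) \<and>
  lin_indep (D i (j-1) - D (i-1) (j-1)) (D (i-1) j - D (i-1) (j-1)) \<and>
  D (i-1) (j-1) \<noteq> D i (j-1) \<and> D i (j-1) \<noteq> D i j \<and> D i j \<noteq> D (i-1) j \<and> D (i-1) j \<noteq> D (i-1) (j-1)"
  using inner_vertex[of i j] unfolding admissible_dual_quad_def by blast

lemma row_face_duals_ne: "f < m \<Longrightarrow> 1 \<le> l \<Longrightarrow> l < n \<Longrightarrow> D f (l-1) \<noteq> D f l"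
proof -
  assume a: "f < m" "1 \<le> l" "l < n"
  show ?thesis
  proof (cases "f \<ge> 1")
    case True
    then show ?thesis using inner_vertex_duals[of f l] a by auto
  next
    case False
    then have "f = 0" by simp
    then show ?thesis using inner_vertex_duals[of 1 l] a dims_ge_2 by auto
  qed
qed

lemma col_face_duals_ne: "g < n \<Longrightarrow> 1 \<le> i \<Longrightarrow> i < m \<Longrightarrow> D (i-1) g \<noteq> D i g"
proof -
  assume a: "g < n" "1 \<le> i" "i < m"
  show ?thesis
  proof (cases "g \<ge> 1")
    case True
    then show ?thesis using inner_vertex_duals[of i g] a by auto
  next
    case False
    then have "g = 0" by simp
    then show ?thesis using inner_vertex_duals[of i 1] a dims_ge_2 by auto
  qed
qed

lemma row_top_views_ne:
  assumes "k \<le> m" "l < n"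
  shows "F k l $1 \<noteq> F k (Suc l) $1 \<or> F k l $2 \<noteq> F k (Suc l) $2"
proof (cases "k < m")
  case True
  have "F k l \<noteq> F k (Suc l)" using face_not_collinear(4)[OF True assms(2)] by auto
  then show ?thesis using top_view_ne_if_dual_plane face_in_dual_plane[OF True assms(2)] by blast
next
  case False
  then obtain f where f: "k = Suc f" "f < m" using assms dims_ge_2 by (cases k) auto
  have "F (Suc f) l \<noteq> F (Suc f) (Suc l)" using face_not_collinear(2)[OF f(2) assms(2)] by auto
  then show ?thesis using top_view_ne_if_dual_plane face_in_dual_plane[OF f(2) assms(2)] f by blast
qed

lemma col_top_views_ne:
  assumes "k < m" "l \<le> n"
  shows "F k l $1 \<noteq> F (Suc k) l $1 \<or> F k l $2 \<noteq> F (Suc k) l $2"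
proof (cases "l < n")
  case True
  have "F k l \<noteq> F (Suc k) l" using face_not_collinear(1)[OF assms(1) True] by auto
  then show ?thesis using top_view_ne_if_dual_plane face_in_dual_plane[OF assms(1) True] by blast
next
  case False
  then obtain g where g: "l = Suc g" "g < n" using assms dims_ge_2 by (cases l) auto
  have "F (Suc k) (Suc g) \<noteq> F k (Suc g)" using face_not_collinear(2)[OF assms(1) g(2)] by auto
  then show ?thesis using top_view_ne_if_dual_plane face_in_dual_plane[OF assms(1) g(2)] g by metis
qed


lemma eq_face_dual:
  assumes ij: "i < m" "j < n" and pq: "p0 \<le> 1" "q0 \<le> 1"
    and h: "\<And>p q. p \<le> 1 \<Longrightarrow> q \<le> 1 \<Longrightarrow> (p, q) \<noteq> (p0, q0) \<Longrightarrow>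
              dual_height (F (i+p) (j+q)) X = c * F (i+p) (j+q) $ 3"
  shows "X = c *\<^sub>R D i j"
proof -
  have "X - c *\<^sub>R D i j = 0"
  proof (rule eq_0_if_annihilated_by_face[OF ij pq])
    fix p q assume "p \<le> 1" "q \<le> 1" "(p, q) \<noteq> (p0, q0)"
    then show "dual_height (F (i + p) (j + q)) (X - c *\<^sub>R D i j) = 0"
      using h dual_height_face_vertex[OF ij, of p q]
        by (simp add: dual_height_diff dual_height_scaleR)
  qed
  then show ?thesis by simp
qed

lemma eq_face_dual_row:
  assumes "f < m" "g < n" "pk \<le> 1" "q0 \<le> 1"
    and h1: "dual_height (F (f+pk) g) X = c * F (f+pk) g $ 3"
    and h2: "dual_height (F (f+pk) (Suc g)) X = c * F (f+pk) (Suc g) $ 3"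
    and h3: "dual_height (F (f+(1-pk)) (g+(1-q0))) X = c * F (f+(1-pk)) (g+(1-q0)) $ 3"
  shows "X = c *\<^sub>R D f g"
proof (rule eq_face_dual[OF assms(1,2), of "1-pk" q0])
  fix p q assume pq: "p \<le> 1" "q \<le> 1" "(p, q) \<noteq> (1 - pk, q0)"
  show "dual_height (F (f + p) (g + q)) X = c * F (f + p) (g + q) $ 3"
  proof (cases "p = pk")
    case True
    then show ?thesis using h1 h2 pq by (cases q) auto
  next
    case False
    then have p: "p = 1 - pk" using pq assms(3) by auto
    then have "q = 1 - q0" using pq assms(4) by auto
    then show ?thesis using h3 p by simp
  qed
qed (use assms in auto)

definition "col_dir j = (SOME d. d \<noteq> 0 \<and> (\<forall>i\<le>m. dual_height (F i j) d = 0))"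

lemma col_dir_spec: "j \<le> n \<Longrightarrow> col_dir j \<noteq> 0 \<and> (\<forall>i\<le>m. dual_height (F i j) (col_dir j) = 0)"
  unfolding col_dir_def using isotropic_column[of j] by (rule someI_ex)

definition "row_plane_data i = (SOME p. (fst p \<noteq> 0 \<or> snd p \<noteq> 0) \<and>
  (\<forall>j\<le>n. dual_height (F i j) (fst p) = snd p * F i j $ 3))"
definition "row_Y i = fst (row_plane_data i)"
definition "row_\<omega> i = snd (row_plane_data i)"

lemma row_plane_spec:
  assumes "i \<le> m"
  shows "(row_Y i \<noteq> 0 \<or> row_\<omega> i \<noteq> 0) \<and> (\<forall>j\<le>n. dual_height (F i j) (row_Y i) = row_\<omega> i * F i j $ 3)"
proof -
  from assms obtain Y \<omega> where "(Y \<noteq> 0 \<or> \<omega> \<noteq> 0) \<and> (\<forall>j\<le>n. dual_height (F i j) Y = \<omega> * F i j $ 3)"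
    using planar_row by blast
  then have "\<exists>p. (fst p \<noteq> 0 \<or> snd p \<noteq> 0) \<and> (\<forall>j\<le>n. dual_height (F i j) (fst p) = snd p * F i j $ 3)"
    by (intro exI[of _ "(Y, \<omega>)"]) simp
  then show ?thesis unfolding row_Y_def row_\<omega>_def row_plane_data_def by (rule someI_ex)
qed

text \<open>The planes through the edge from \<open>F (f+pk) (l-1)\<close> to \<open>F (f+pk) l\<close> have their dual points on a
  line through \<open>D f (l-1)\<close>; \<open>edge_dir f pk l\<close>, obtained from the plane of row \<open>f+pk\<close>, is its
  direction.\<close>

definition "edge_dir f pk l = row_Y (f+pk) - row_\<omega> (f+pk) *\<^sub>R D f (l-1)"

lemma edge_dir_annihilates:
  assumes "f < m" "pk \<le> 1" "1 \<le> l" "l \<le> n" "q \<le> 1"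
  shows "dual_height (F (f+pk) (l-1+q)) (edge_dir f pk l) = 0"
proof -
  have k: "f + pk \<le> m" using assms by auto
  have "dual_height (F (f+pk) (l-1+q)) (row_Y (f+pk)) = row_\<omega> (f+pk) * F (f+pk) (l-1+q) $ 3"
    using row_plane_spec[OF k] assms by auto
  moreover have "dual_height (F (f+pk) (l-1+q)) (D f (l-1)) = F (f+pk) (l-1+q) $ 3"
    using dual_height_face_vertex[of f "l-1" pk q] assms by auto
  ultimately show ?thesis by (simp add: edge_dir_def dual_height_diff dual_height_scaleR)
qed

text \<open>A whole row never lies in the plane of an adjacent face: that plane would then contain three
  vertices of the neighbouring face in the same row of faces.\<close>

lemma row_not_in_face_dual_plane:
  assumes f: "f < m" and pk: "pk \<le> 1" and l: "l < n"
    and row: "\<And>l'. l' \<le> n \<Longrightarrow> dual_height (F (f+pk) l') (D f l) = F (f+pk) l' $ 3"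
  shows False
proof (cases "Suc l < n")
  case True
  have "D f l = 1 *\<^sub>R D f (Suc l)"
  proof (rule eq_face_dual_row[OF f True pk, of 1])
    show "dual_height (F (f + (1 - pk)) (Suc l + (1 - 1))) (D f l) = 1 * F (f + (1 - pk)) (Suc l + (1 - 1)) $ 3"
      using dual_height_face_vertex[of f l "1-pk" 1] f l by simp
  qed (use row True in simp_all)
  then show False using row_face_duals_ne[OF f, of "Suc l"] True by simp
next
  case False
  then have l1: "Suc (l - 1) = l" "l - 1 < n" using l dims_ge_2 by auto
  have "D f l = 1 *\<^sub>R D f (l - 1)"
  proof (rule eq_face_dual_row[OF f l1(2) pk, of 0])
    show "dual_height (F (f + (1 - pk)) (l - 1 + (1 - 0))) (D f l) = 1 * F (f + (1 - pk)) (l - 1 + (1 - 0)) $ 3"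
      using dual_height_face_vertex[of f l "1-pk" 0] f l l1 by simp
  qed (use row l l1(1) in simp_all)
  then show False using row_face_duals_ne[OF f, of l] l l1 by simp
qed

lemma edge_dir_ne_0:
  assumes f: "f < m" and pk: "pk \<le> 1" and l: "1 \<le> l" "l \<le> n"
  shows "edge_dir f pk l \<noteq> 0"
proof
  let ?Y = "row_Y (f+pk)" and ?w = "row_\<omega> (f+pk)"
  assume "edge_dir f pk l = 0"
  then have Y: "?Y = ?w *\<^sub>R D f (l-1)" by (simp add: edge_dir_def)
  have spec: "(?Y \<noteq> 0 \<or> ?w \<noteq> 0) \<and> (\<forall>l'\<le>n. dual_height (F (f+pk) l') ?Y = ?w * F (f+pk) l' $ 3)"
    using row_plane_spec[of "f+pk"] f pk by simp
  then have "?w \<noteq> 0" using Y by auto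
  then have "dual_height (F (f+pk) l') (D f (l-1)) = F (f+pk) l' $ 3" if "l' \<le> n" for l'
    using spec that Y by (simp add: dual_height_scaleR)
  moreover have "l - 1 < n" using l by simp
  ultimately show False using row_not_in_face_dual_plane[OF f pk] by blast
qed

lemma lin_indep_edge_dir_row_diff:
  assumes f: "f < m" and pk: "pk \<le> 1" and l: "1 \<le> l" "l < n"
  shows "lin_indep (edge_dir f pk l) (D f l - D f (l-1))"
proof (rule lin_indep_commute, rule lin_indep_if_not_parallel)
  let ?Y = "row_Y (f+pk)" and ?w = "row_\<omega> (f+pk)" and ?k' = "f + (1 - pk)"
  have l1: "Suc (l - 1) = l" "l - 1 < n" using l by auto
  show "D f l - D f (l-1) \<noteq> 0" using row_face_duals_ne[OF f l] by simp
  fix c show "edge_dir f pk l \<noteq> c *\<^sub>R (D f l - D f (l-1))"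
  proof
    assume par: "edge_dir f pk l = c *\<^sub>R (D f l - D f (l-1))"
    have "dual_height (F ?k' l) (D f l) = F ?k' l $ 3" "dual_height (F ?k' l) (D f (l-1)) = F ?k' l $ 3"
      using dual_height_face_vertex[of f l "1-pk" 0] dual_height_face_vertex[of f "l-1" "1-pk" 1] f l l1
      by simp_all
    moreover from this have "dual_height (F ?k' l) (edge_dir f pk l) = 0"
      unfolding par by (simp add: dual_height_scaleR dual_height_diff)
    ultimately have other: "dual_height (F ?k' l) ?Y = ?w * F ?k' l $ 3"
      by (simp add: edge_dir_def dual_height_diff dual_height_scaleR)
    have "?Y = ?w *\<^sub>R D f (l-1)"
    proof (rule eq_face_dual_row[OF f l1(2) pk, of 0])
      show "dual_height (F (f + (1 - pk)) (l - 1 + (1 - 0))) ?Y = ?w * F (f + (1 - pk)) (l - 1 + (1 - 0)) $ 3"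
        using other l1 by simp
    qed (use row_plane_spec[of "f+pk"] f pk l l1(1) in simp_all)
    then have "edge_dir f pk l = 0" by (simp add: edge_dir_def)
    then show False using edge_dir_ne_0[OF f pk l(1)] l by simp
  qed
qed

lemma lin_indep_col_dir_col_diff:
  assumes i: "1 \<le> i" "i < m" and g: "g < n" and qj: "qj \<le> 1"
  shows "lin_indep (col_dir (g+qj)) (D i g - D (i-1) g)"
proof (rule lin_indep_if_not_parallel)
  let ?d = "col_dir (g+qj)"
  have d: "?d \<noteq> 0" "\<And>i'. i' \<le> m \<Longrightarrow> dual_height (F i' (g+qj)) ?d = 0"
    using col_dir_spec[of "g+qj"] g qj by auto
  then show "?d \<noteq> 0" by simp
  fix c show "D i g - D (i-1) g \<noteq> c *\<^sub>R ?d"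
  proof
    assume par: "D i g - D (i-1) g = c *\<^sub>R ?d"
    then have "c \<noteq> 0" using col_face_duals_ne[OF g _ i(2)] i by auto
    have "dual_height (F i (g + (1-qj))) (D i g) = F i (g + (1-qj)) $ 3"
      "dual_height (F (i - 1 + 1) (g + (1-qj))) (D (i-1) g) = F (i - 1 + 1) (g + (1-qj)) $ 3"
      using dual_height_face_vertex[of i g 0 "1-qj"] dual_height_face_vertex[of "i-1" g 1 "1-qj"] i g
        by simp_all
    then have "c * dual_height (F i (g + (1-qj))) ?d = 0"
      using i(1) arg_cong[OF par, of "dual_height (F i (g + (1-qj)))"]
        by (simp add: dual_height_diff dual_height_scaleR)
    then have other: "dual_height (F i (g + (1-qj))) ?d = 0" using \<open>c \<noteq> 0\<close> by simp
    have "?d = 0"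
    proof (rule eq_0_if_annihilated_by_face[OF i(2) g, of 1 "1-qj"])
      fix p q :: nat assume pq: "p \<le> 1" "q \<le> 1" "(p, q) \<noteq> (1, 1 - qj)"
      show "dual_height (F (i + p) (g + q)) ?d = 0"
      proof (cases "q = qj")
        case True
        then show ?thesis using d(2)[of "i+p"] pq i by simp
      next
        case False
        then have "q = 1 - qj" "p = 0" using pq qj by auto
        then show ?thesis using other by simp
      qed
    qed auto
    then show False using d(1) by simp
  qed
qed

lemma lin_indep_col_dir_edge_dir:
  assumes f: "f < m" and pk: "pk \<le> 1" and g: "g < n" and qj: "qj \<le> 1"
  shows "lin_indep (col_dir (g+qj)) (edge_dir f pk (Suc g))"
proof (rule lin_indep_if_not_parallel)
  let ?d = "col_dir (g+qj)" and ?Y = "row_Y (f+pk)" and ?w = "row_\<omega> (f+pk)"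
  have d: "?d \<noteq> 0" "\<And>i'. i' \<le> m \<Longrightarrow> dual_height (F i' (g+qj)) ?d = 0"
    using col_dir_spec[of "g+qj"] g qj by auto
  then show "?d \<noteq> 0" by simp
  fix c show "edge_dir f pk (Suc g) \<noteq> c *\<^sub>R ?d"
  proof
    assume par: "edge_dir f pk (Suc g) = c *\<^sub>R ?d"
    have row: "dual_height (F (f+pk) l') ?Y = ?w * F (f+pk) l' $ 3" if "l' \<le> n" for l'
      using row_plane_spec[of "f+pk"] f pk that by auto
    have "dual_height (F (f + (1-pk)) (g+qj)) (edge_dir f pk (Suc g)) = 0"
      using par d(2)[of "f + (1-pk)"] f pk by (simp add: dual_height_scaleR)
    moreover have "dual_height (F (f + (1-pk)) (g+qj)) (D f g) = F (f + (1-pk)) (g+qj) $ 3"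
      using dual_height_face_vertex[of f g "1-pk" qj] f g qj by simp
    ultimately have other: "dual_height (F (f + (1-pk)) (g+qj)) ?Y = ?w * F (f + (1-pk)) (g+qj) $ 3"
      by (simp add: edge_dir_def dual_height_diff dual_height_scaleR)
    have "?Y = ?w *\<^sub>R D f g"
    proof (rule eq_face_dual_row[OF f g pk, of "1-qj"])
      show "dual_height (F (f + pk) g) ?Y = ?w * F (f + pk) g $ 3"
        "dual_height (F (f + pk) (Suc g)) ?Y = ?w * F (f + pk) (Suc g) $ 3" using row g by simp_all
      show "dual_height (F (f + (1 - pk)) (g + (1 - (1 - qj)))) ?Y = ?w * F (f + (1 - pk)) (g + (1 - (1 - qj))) $ 3"
        using other qj by simp
    qed simp
    then have "edge_dir f pk (Suc g) = 0" by (simp add: edge_dir_def)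
    then show False using edge_dir_ne_0[OF f pk] g by simp
  qed
qed

definition "row_diff k l = D k l - D k (l-1)"

lemma row_diff_annihilates:
  assumes "k < m" "1 \<le> l" "l < n" "p \<le> 1"
  shows "dual_height (F (k+p) l) (row_diff k l) = 0"
proof -
  have "dual_height (F (k+p) (l + 0)) (D k l) = F (k+p) (l+0) $ 3"
    using dual_height_face_vertex[of k l p 0] assms by simp
  moreover have "dual_height (F (k+p) (l - 1 + 1)) (D k (l-1)) = F (k+p) (l-1+1) $ 3"
    using dual_height_face_vertex[of k "l-1" p 1] assms by simp
  moreover have "l - 1 + 1 = l" using assms by simp
  ultimately show ?thesis by (simp add: row_diff_def dual_height_diff)
qed

lemma row_diff_parallel_col_dir:
  assumes "k < m" "1 \<le> l" "l < n"
  shows "\<exists>c. row_diff k l = c *\<^sub>R col_dir l"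
proof (rule parallel_if_dual_height_eq_0)
  show "dual_height (F k l) (row_diff k l) = 0" using row_diff_annihilates[of k l 0] assms by simp
  show "dual_height (F (Suc k) l) (row_diff k l) = 0" using row_diff_annihilates[of k l 1] assms
    by simp
  show "dual_height (F k l) (col_dir l) = 0" "dual_height (F (Suc k) l) (col_dir l) = 0" "col_dir l \<noteq> 0"
    using col_dir_spec[of l] assms by auto
  show "F k l $ 1 \<noteq> F (Suc k) l $ 1 \<or> F k l $ 2 \<noteq> F (Suc k) l $ 2" using col_top_views_ne assms
    by simp
qed

lemma row_diff_ne_0: "k < m \<Longrightarrow> 1 \<le> l \<Longrightarrow> l < n \<Longrightarrow> row_diff k l \<noteq> 0"
  using row_face_duals_ne[of k l] by (simp add: row_diff_def)

lemma row_diff_ratio: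
  assumes k: "1 \<le> k" "k < m" and l: "1 \<le> l" "l < n"
  shows "\<exists>r>0. row_diff k l = r *\<^sub>R row_diff (k-1) l"
proof -
  obtain c1 where c1: "row_diff k l = c1 *\<^sub>R col_dir l" using row_diff_parallel_col_dir k l
    by blast
  have km: "k - 1 < m" using k by simp
  obtain c0 where c0: "row_diff (k-1) l = c0 *\<^sub>R col_dir l" using row_diff_parallel_col_dir[OF km l]
    by blast
  have n1: "c1 \<noteq> 0" using row_diff_ne_0[of k l] k l c1 by auto
  have n0: "c0 \<noteq> 0" using row_diff_ne_0[of "k-1" l] k l c0 by auto
  have "row_diff (k-1) l = (c0 / c1) *\<^sub>R row_diff k l" using c0 c1 n1 by simp
  then have "c0 / c1 > 0" using inner_vertex_duals[of k l] k l by (simp add: row_diff_def)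
  then have pos: "c1 / c0 > 0" by (auto simp: zero_less_divide_iff)
  have "row_diff k l = (c1 / c0) *\<^sub>R row_diff (k-1) l" using c0 c1 n0 by simp
  then show ?thesis using pos by blast
qed

definition "row_ratio k l = (SOME r. r > 0 \<and> row_diff k l = r *\<^sub>R row_diff (k-1) l)"

lemma row_ratio_spec:
  "1 \<le> k \<Longrightarrow> k < m \<Longrightarrow> 1 \<le> l \<Longrightarrow> l < n \<Longrightarrow>
    row_ratio k l > 0 \<and> row_diff k l = row_ratio k l *\<^sub>R row_diff (k-1) l"
  unfolding row_ratio_def by (rule someI_ex) (rule row_diff_ratio)

definition "col_diff k l = D k (l-1) - D (k-1) (l-1)"

lemma col_diff_parallel_edge_dir:
  assumes k: "1 \<le> k" "k < m" and l: "1 \<le> l" "l \<le> n"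
  shows "\<exists>c. col_diff k l = c *\<^sub>R edge_dir (k-1) 1 l"
proof (rule parallel_if_dual_height_eq_0)
  have kk: "k - 1 + 1 = k" "k - 1 < m" using k by auto
  have l1: "l - 1 + 1 = l" "l - 1 < n" using l by auto
  have a: "dual_height (F k (l-1+q)) (edge_dir (k-1) 1 l) = 0" if "q \<le> 1" for q
    using edge_dir_annihilates[of "k-1" 1 l q] kk l that by simp
  show "dual_height (F k (l-1)) (edge_dir (k-1) 1 l) = 0" using a[of 0] by simp
  show "dual_height (F k l) (edge_dir (k-1) 1 l) = 0" using a[of 1] l1 by simp
  show "edge_dir (k-1) 1 l \<noteq> 0" using edge_dir_ne_0[of "k-1" 1 l] kk l by simp
  have b: "dual_height (F k (l-1+q)) (col_diff k l) = 0" if "q \<le> 1" for q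
  proof -
    have "dual_height (F (k+0) (l-1+q)) (D k (l-1)) = F (k+0) (l-1+q) $ 3"
      using dual_height_face_vertex[of k "l-1" 0 q] k l1 that by simp
    moreover have "dual_height (F (k-1+1) (l-1+q)) (D (k-1) (l-1)) = F (k-1+1) (l-1+q) $ 3"
      using dual_height_face_vertex[of "k-1" "l-1" 1 q] kk l1 that by simp
    ultimately show ?thesis using kk by (simp add: col_diff_def dual_height_diff)
  qed
  show "dual_height (F k (l-1)) (col_diff k l) = 0" using b[of 0] by simp
  show "dual_height (F k l) (col_diff k l) = 0" using b[of 1] l1 by simp
  show "F k (l - 1) $ 1 \<noteq> F k l $ 1 \<or> F k (l - 1) $ 2 \<noteq> F k l $ 2"
    using row_top_views_ne[of k "l-1"] k l1 by simp
qed

definition "col_coef k l = (SOME c. col_diff k l = c *\<^sub>R edge_dir (k-1) 1 l)"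

lemma col_coef_spec:
  "1 \<le> k \<Longrightarrow> k < m \<Longrightarrow> 1 \<le> l \<Longrightarrow> l \<le> n \<Longrightarrow>
    col_diff k l = col_coef k l *\<^sub>R edge_dir (k-1) 1 l"
  unfolding col_coef_def by (rule someI_ex) (rule col_diff_parallel_edge_dir)

text \<open>Expanding \<open>col_diff k (Suc l) = col_diff k l + row_diff k l - row_diff (k-1) l\<close> in the basis
  \<open>edge_dir (k-1) 1 l\<close>, \<open>row_diff (k-1) l\<close> gives both identities.\<close>

lemma col_coef_step:
  assumes k: "1 \<le> k" "k < m" and l: "1 \<le> l" "l < n"
  shows "col_coef k (Suc l) = col_coef k l \<and> row_ratio k l = 1 - col_coef k (Suc l) * row_\<omega> k"
proof -
  let ?Z = "edge_dir (k-1) 1 l" and ?u = "row_diff (k-1) l" and ?\<omega> = "row_\<omega> k"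
  have kk: "k - 1 + 1 = k" "k - 1 < m" using k by auto
  have ind: "lin_indep ?Z ?u" using lin_indep_edge_dir_row_diff[of "k-1" 1 l] kk l
    by (simp add: row_diff_def)
  have Z1: "edge_dir (k-1) 1 (Suc l) = ?Z - ?\<omega> *\<^sub>R ?u"
    using kk l by (simp add: edge_dir_def row_diff_def algebra_simps)
  have w1: "col_diff k (Suc l) = col_diff k l + row_diff k l - ?u"
    using l by (simp add: col_diff_def row_diff_def algebra_simps)
  have r: "row_diff k l = row_ratio k l *\<^sub>R ?u" using row_ratio_spec[OF k l] by simp
  have c1: "col_diff k (Suc l) = col_coef k (Suc l) *\<^sub>R edge_dir (k-1) 1 (Suc l)"
    using col_coef_spec[OF k, of "Suc l"] l by simp
  have c0: "col_diff k l = col_coef k l *\<^sub>R ?Z" using col_coef_spec[OF k, of l] l by simp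
  have "(col_coef k (Suc l) - col_coef k l) *\<^sub>R ?Z + (1 - col_coef k (Suc l) * ?\<omega> - row_ratio k l) *\<^sub>R ?u = 0"
  proof -
    have "col_coef k (Suc l) *\<^sub>R (?Z - ?\<omega> *\<^sub>R ?u) = col_coef k l *\<^sub>R ?Z + row_ratio k l *\<^sub>R ?u - ?u"
      using c1 c0 w1 r Z1 by simp
    then show ?thesis by (simp add: algebra_simps)
  qed
  then have h: "col_coef k (Suc l) - col_coef k l = 0 \<and> 1 - col_coef k (Suc l) * ?\<omega> - row_ratio k l = 0"
    using ind unfolding lin_indep_def by blast
  have h1: "col_coef k (Suc l) = col_coef k l" using h by simp
  have h2: "row_ratio k l = 1 - col_coef k (Suc l) * ?\<omega>" using h by linarith
  show ?thesis using h1 h2 by simp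
qed

lemma row_ratio_const:
  assumes k: "1 \<le> k" "k < m" and l: "1 \<le> l" "l < n"
  shows "row_ratio k l = row_ratio k 1"
  using l
proof (induction l)
  case 0
  then show ?case by simp
next
  case (Suc l)
  show ?case
  proof (cases "l = 0")
    case True
    then show ?thesis by simp
  next
    case False
    then have "1 \<le> l" "l < n" using Suc by auto
    then have "row_ratio k l = row_ratio k (Suc l)"
      using col_coef_step[OF k, of l] col_coef_step[OF k, of "Suc l"] Suc by simp
    then show ?thesis using Suc \<open>1 \<le> l\<close> \<open>l < n\<close> by simp
  qed
qed

definition "row_scale k = (\<Prod>i\<in>{1..<k}. row_ratio i 1)"

lemma row_scale_pos: "k \<le> m \<Longrightarrow> row_scale k > 0"
  unfolding row_scale_def using row_ratio_spec dims_ge_2 by (intro prod_pos) auto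

lemma row_scale_1: "row_scale 1 = 1" "row_scale (Suc 0) = 1" by (simp_all add: row_scale_def)

lemma row_scale_Suc: "1 \<le> k \<Longrightarrow> row_scale (Suc k) = row_scale k * row_ratio k 1"
  unfolding row_scale_def by (simp add: prod.atLeastLessThan_Suc)

lemma row_diff_eq_row_scale:
  assumes "1 \<le> k" "k \<le> m" "1 \<le> l" "l < n"
  shows "row_diff (k-1) l = row_scale k *\<^sub>R row_diff 0 l"
  using assms
proof (induction k)
  case 0
  then show ?case by simp
next
  case (Suc k)
  show ?case
  proof (cases "k = 0")
    case True
    then show ?thesis by (simp add: row_scale_1)
  next
    case False
    then have k: "1 \<le> k" "k < m" using Suc by auto
    have "row_diff k l = row_ratio k l *\<^sub>R row_diff (k-1) l"
      using row_ratio_spec[OF k Suc.prems(3,4)] by simp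
    also have "\<dots> = row_ratio k 1 *\<^sub>R (row_scale k *\<^sub>R row_diff 0 l)"
      using Suc k row_ratio_const[OF k Suc.prems(3,4)] by simp
    also have "\<dots> = row_scale (Suc k) *\<^sub>R row_diff 0 l" using row_scale_Suc[OF k(1)]
      by (simp add: mult.commute)
    finally show ?thesis by simp
  qed
qed


text \<open>For \<open>1 \<le> k \<le> m\<close> and \<open>1 \<le> l \<le> n\<close>, \<open>QT k l\<close> is the dual point \<open>D (k-1) (l-1)\<close>. The ghost points
  with \<open>k \<in> {0, m+1}\<close> are combined from the neighbouring ones and the plane of row \<open>0\<close> resp. \<open>m\<close>,
  those with \<open>l \<in> {0, n+1}\<close> are shifted along the column directions, so that every vertex lies in
  the planes dual to its four surrounding points \<open>QT\<close>. The weight keeps \<open>\<sigma>T\<close> positive.\<close>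

definition "ghost_weight i = 1 / (\<bar>row_\<omega> i\<bar> + 1)"
definition "bT l = (if l = 0 then D 0 0 - col_dir 0 else if l \<le> n then D 0 (l-1) else D 0 (n-1) + col_dir n)"
definition "a_inner k = D (k-1) 0 - row_scale k *\<^sub>R D 0 0"
definition "\<sigma>T k = (if k = 0 then 1 - ghost_weight 0 * row_\<omega> 0
  else if k \<le> m then row_scale k
  else (1 - ghost_weight m * row_\<omega> m) * row_scale m)"
definition "aT k = (if k = 0 then (1 - ghost_weight 0 * row_\<omega> 0) *\<^sub>R a_inner 1 + ghost_weight 0 *\<^sub>R row_Y 0
  else if k \<le> m then a_inner k
  else (1 - ghost_weight m * row_\<omega> m) *\<^sub>R a_inner m + ghost_weight m *\<^sub>R row_Y m)"
definition "QT k l = aT k + \<sigma>T k *\<^sub>R bT l"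

lemma ghost_weight_bounds: "ghost_weight i > 0" "ghost_weight i * row_\<omega> i < 1"
proof -
  show "ghost_weight i > 0" by (simp add: ghost_weight_def add_nonneg_pos)
  have "ghost_weight i * row_\<omega> i = row_\<omega> i / (\<bar>row_\<omega> i\<bar> + 1)" by (simp add: ghost_weight_def)
  also have "\<dots> < 1" by (simp add: divide_less_eq add_nonneg_pos)
  finally show "ghost_weight i * row_\<omega> i < 1" .
qed

lemma sigmaT_pos: "k \<le> Suc m \<Longrightarrow> \<sigma>T k > 0"
  using row_scale_pos[of k] row_scale_pos[of m] ghost_weight_bounds[of 0] ghost_weight_bounds[of m]
    by (auto simp: \<sigma>T_def)

lemma face_dual_eq_row_shift:
  assumes k: "1 \<le> k" "k \<le> m" and l: "1 \<le> l" "l \<le> n"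
  shows "D (k-1) (l-1) = a_inner k + row_scale k *\<^sub>R D 0 (l-1)"
  using l
proof (induction l)
  case 0
  then show ?case by simp
next
  case (Suc l)
  show ?case
  proof (cases "l = 0")
    case True
    then show ?thesis by (simp add: a_inner_def)
  next
    case False
    then have l': "1 \<le> l" "l < n" using Suc by auto
    have "D (k-1) l = D (k-1) (l-1) + row_diff (k-1) l" by (simp add: row_diff_def)
    also have "\<dots> = a_inner k + row_scale k *\<^sub>R D 0 (l-1) + row_scale k *\<^sub>R row_diff 0 l"
      using Suc.IH l' row_diff_eq_row_scale[OF k l'] by simp
    also have "\<dots> = a_inner k + row_scale k *\<^sub>R D 0 l" by (simp add: row_diff_def algebra_simps)
    finally show ?thesis by simp
  qed
qed

lemma QT_interior:
  assumes "1 \<le> k" "k \<le> m" "1 \<le> l" "l \<le> n"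
  shows "QT k l = D (k-1) (l-1)"
  using face_dual_eq_row_shift[OF assms] assms by (simp add: QT_def aT_def \<sigma>T_def bT_def)

lemma QT_row_0: "QT 0 l = QT 1 l + ghost_weight 0 *\<^sub>R (row_Y 0 - row_\<omega> 0 *\<^sub>R QT 1 l)"
  using dims_ge_2 by (simp add: QT_def aT_def \<sigma>T_def row_scale_1 algebra_simps)

lemma QT_row_Suc_m: "QT (Suc m) l = QT m l + ghost_weight m *\<^sub>R (row_Y m - row_\<omega> m *\<^sub>R QT m l)"
  using dims_ge_2 by (simp add: QT_def aT_def \<sigma>T_def algebra_simps)

lemma QT_col_0: "QT k 0 = QT k 1 - \<sigma>T k *\<^sub>R col_dir 0"
  using dims_ge_2 by (simp add: QT_def bT_def algebra_simps)

lemma QT_col_Suc_n: "QT k (Suc n) = QT k n + \<sigma>T k *\<^sub>R col_dir n"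
  using dims_ge_2 by (simp add: QT_def bT_def algebra_simps)

lemma dual_height_QT_inner:
  assumes ij: "i \<le> m" "j \<le> n" and k: "k = i \<or> k = Suc i" and l: "l = j \<or> l = Suc j" "1 \<le> l" "l \<le> n"
  shows "dual_height (F i j) (QT k l) = F i j $ 3"
proof -
  have int: "dual_height (F i j) (QT k' l) = F i j $ 3" if k': "k' = i \<or> k' = Suc i" "1 \<le> k'" "k' \<le> m" for k'
  proof -
    have e: "QT k' l = D (k'-1) (l-1)" using QT_interior[OF k'(2,3) l(2,3)] .
    define p q where "p = i - (k' - 1)" and "q = j - (l - 1)"
    then have pq: "p \<le> 1" "q \<le> 1" "i = k' - 1 + p" "j = l - 1 + q" using k'(1,2) l(1,2) by auto
    have "k' - 1 < m" "l - 1 < n" using k' l by auto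
    then show ?thesis using dual_height_face_vertex[of "k'-1" "l-1" p q] pq e by simp
  qed
  consider "1 \<le> k \<and> k \<le> m" | "k = 0" | "k = Suc m" using k ij by force
  then show ?thesis
  proof cases
    case 1
    then show ?thesis using int k by blast
  next
    case 2
    then have i0: "i = 0" using k by simp
    have a: "dual_height (F i j) (QT 1 l) = F i j $ 3" using int[of 1] i0 dims_ge_2 by simp
    have b: "dual_height (F i j) (row_Y 0) = row_\<omega> 0 * F i j $ 3" using row_plane_spec[of 0] ij i0
      by simp
    show ?thesis using 2 a b
      by (simp add: QT_row_0 dual_height_add dual_height_diff dual_height_scaleR i0 algebra_simps)
  next
    case 3
    then have im: "i = m" using k ij by simp
    have a: "dual_height (F i j) (QT m l) = F i j $ 3" using int[of m] im dims_ge_2 by simp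
    have b: "dual_height (F i j) (row_Y m) = row_\<omega> m * F i j $ 3" using row_plane_spec[of m] ij im
      by simp
    show ?thesis using 3 a b
      by (simp add: QT_row_Suc_m dual_height_add dual_height_diff dual_height_scaleR im algebra_simps)
  qed
qed

lemma dual_height_QT:
  assumes ij: "i \<le> m" "j \<le> n" and k: "k = i \<or> k = Suc i" and l: "l = j \<or> l = Suc j"
  shows "dual_height (F i j) (QT k l) = F i j $ 3"
proof -
  consider "1 \<le> l \<and> l \<le> n" | "l = 0" | "l = Suc n" using l ij by force
  then show ?thesis
  proof cases
    case 1
    then show ?thesis using dual_height_QT_inner assms by blast
  next
    case 2
    then have j0: "j = 0" using l by simp
    have "dual_height (F i j) (QT k 1) = F i j $ 3"
      using dual_height_QT_inner[OF ij k, of 1] j0 dims_ge_2 by simp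
    moreover have "dual_height (F i j) (col_dir 0) = 0" using col_dir_spec[of 0] ij j0 by simp
    ultimately show ?thesis using 2 by (simp add: QT_col_0 dual_height_diff dual_height_scaleR)
  next
    case 3
    then have jn: "j = n" using l ij by simp
    have "dual_height (F i j) (QT k n) = F i j $ 3"
      using dual_height_QT_inner[OF ij k, of n] jn dims_ge_2 by simp
    moreover have "dual_height (F i j) (col_dir n) = 0" using col_dir_spec[of n] ij jn by simp
    ultimately show ?thesis using 3 by (simp add: QT_col_Suc_n dual_height_add dual_height_scaleR)
  qed
qed


definition "dbT j = bT (Suc j) - bT j"
definition "\<Delta>T i j = QT (Suc i) j - QT i j"

lemma dbT_0: "dbT 0 = col_dir 0" using dims_ge_2 by (simp add: dbT_def bT_def)
lemma dbT_inner: "1 \<le> j \<Longrightarrow> j < n \<Longrightarrow> dbT j = row_diff 0 j"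
  by (simp add: dbT_def bT_def row_diff_def)
lemma dbT_n: "dbT n = col_dir n" using dims_ge_2 by (simp add: dbT_def bT_def)

lemma DeltaT_inner: "1 \<le> i \<Longrightarrow> i < m \<Longrightarrow> 1 \<le> j \<Longrightarrow> j \<le> n \<Longrightarrow> \<Delta>T i j = D i (j-1) - D (i-1) (j-1)"
  using QT_interior[of i j] QT_interior[of "Suc i" j] by (simp add: \<Delta>T_def)

lemma DeltaT_col_0: "\<Delta>T i 0 = \<Delta>T i 1 + (\<sigma>T i - \<sigma>T (Suc i)) *\<^sub>R col_dir 0"
  by (simp add: \<Delta>T_def QT_col_0 algebra_simps)

lemma DeltaT_row_0: "1 \<le> j \<Longrightarrow> j \<le> n \<Longrightarrow> \<Delta>T 0 j = (- ghost_weight 0) *\<^sub>R edge_dir 0 0 j"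
  using QT_interior[of 1 j] dims_ge_2 by (simp add: \<Delta>T_def QT_row_0 edge_dir_def algebra_simps)

lemma DeltaT_row_m: "1 \<le> j \<Longrightarrow> j \<le> n \<Longrightarrow> \<Delta>T m j = ghost_weight m *\<^sub>R edge_dir (m-1) 1 j"
  using QT_interior[of m j] dims_ge_2
    by (simp add: \<Delta>T_def QT_row_Suc_m edge_dir_def algebra_simps)

lemma lin_indep_col_dir_DeltaT_1:
  assumes i: "i \<le> m"
  shows "lin_indep (col_dir 0) (\<Delta>T i 1)"
proof -
  consider "i = 0" | "1 \<le> i \<and> i < m" | "i = m" using i by force
  then show ?thesis
  proof cases
    case 1
    have "lin_indep (col_dir (0+0)) (edge_dir 0 0 (Suc 0))"
      using lin_indep_col_dir_edge_dir[of 0 0 0 0] dims_ge_2 by simp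
    then show ?thesis using 1 DeltaT_row_0[of 1] dims_ge_2 ghost_weight_bounds(1)[of 0]
      by (simp add: lin_indep_scaleR_iff lin_indep_uminus_iff)
  next
    case 2
    have "lin_indep (col_dir (0+0)) (D i 0 - D (i-1) 0)"
      using lin_indep_col_dir_col_diff[of i 0 0] 2 dims_ge_2 by simp
    then show ?thesis using DeltaT_inner[of i 1] 2 dims_ge_2 by simp
  next
    case 3
    have "lin_indep (col_dir (0+0)) (edge_dir (m-1) 1 (Suc 0))"
      using lin_indep_col_dir_edge_dir[of "m-1" 1 0 0] dims_ge_2 by simp
    then show ?thesis using 3 DeltaT_row_m[of 1] dims_ge_2 ghost_weight_bounds(1)[of m]
      by (simp add: lin_indep_scaleR_iff lin_indep_uminus_iff)
  qed
qed

lemma lin_indep_dbT_DeltaT_last_col: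
  assumes i: "i \<le> m"
  shows "lin_indep (dbT n) (\<Delta>T i n)"
proof -
  have e: "n - 1 + 1 = n" "Suc (n - 1) = n" using dims_ge_2 by auto
  consider "i = 0" | "1 \<le> i \<and> i < m" | "i = m" using i by force
  then show ?thesis
  proof cases
    case 1
    have "lin_indep (col_dir (n-1+1)) (edge_dir 0 0 (Suc (n-1)))"
      using lin_indep_col_dir_edge_dir[of 0 0 "n-1" 1] dims_ge_2 by simp
    then show ?thesis using 1 DeltaT_row_0[of n] dims_ge_2 ghost_weight_bounds(1)[of 0] e
      by (simp add: lin_indep_scaleR_iff lin_indep_uminus_iff dbT_n)
  next
    case 2
    have "lin_indep (col_dir (n-1+1)) (D i (n-1) - D (i-1) (n-1))"
      using lin_indep_col_dir_col_diff[of i "n-1" 1] 2 dims_ge_2 by simp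
    then show ?thesis using DeltaT_inner[of i n] 2 dims_ge_2 e by (simp add: dbT_n)
  next
    case 3
    have "lin_indep (col_dir (n-1+1)) (edge_dir (m-1) 1 (Suc (n-1)))"
      using lin_indep_col_dir_edge_dir[of "m-1" 1 "n-1" 1] dims_ge_2 by simp
    then show ?thesis using 3 DeltaT_row_m[of n] dims_ge_2 ghost_weight_bounds(1)[of m] e
      by (simp add: lin_indep_scaleR_iff lin_indep_uminus_iff dbT_n)
  qed
qed

lemma lin_indep_dbT_DeltaT_inner_col:
  assumes i: "i \<le> m" and j: "1 \<le> j" "j < n"
  shows "lin_indep (dbT j) (\<Delta>T i j)"
proof -
  consider "i = 0" | "1 \<le> i \<and> i < m" | "i = m" using i by force
  then show ?thesis
  proof cases
    case 1
    have "lin_indep (edge_dir 0 0 j) (row_diff 0 j)"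
      using lin_indep_edge_dir_row_diff[of 0 0 j] dims_ge_2 j by (simp add: row_diff_def)
    then show ?thesis using 1 DeltaT_row_0[of j] j ghost_weight_bounds(1)[of 0] dbT_inner[OF j]
      by (simp add: lin_indep_scaleR_iff lin_indep_uminus_iff lin_indep_commute)
  next
    case 2
    have "lin_indep (\<Delta>T i j) (row_diff (i-1) j)"
      using inner_vertex_duals[of i j] 2 j DeltaT_inner[of i j] by (simp add: row_diff_def)
    then show ?thesis using row_diff_eq_row_scale[of i j] row_scale_pos[of i] 2 j dbT_inner[OF j]
      by (simp add: lin_indep_scaleR_iff lin_indep_commute)
  next
    case 3
    have "lin_indep (edge_dir (m-1) 1 j) (row_diff (m-1) j)"
      using lin_indep_edge_dir_row_diff[of "m-1" 1 j] dims_ge_2 j by (simp add: row_diff_def)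
    then show ?thesis using 3 row_diff_eq_row_scale[of m j] row_scale_pos[of m] DeltaT_row_m[of j] j
        dims_ge_2 ghost_weight_bounds(1)[of m] dbT_inner[OF j]
      by (simp add: lin_indep_scaleR_iff lin_indep_uminus_iff lin_indep_commute)
  qed
qed

lemma lin_indep_dbT_DeltaT:
  assumes i: "i \<le> m" and j: "j \<le> n"
  shows "lin_indep (dbT j) (\<Delta>T i j)"
proof -
  consider "j = 0" | "j = n" | "1 \<le> j \<and> j < n" using j by force
  then show ?thesis
  proof cases
    case 1
    then show ?thesis using lin_indep_add_scaleR[OF lin_indep_col_dir_DeltaT_1[OF i]]
      by (simp add: dbT_0 DeltaT_col_0)
  qed (use lin_indep_dbT_DeltaT_last_col lin_indep_dbT_DeltaT_inner_col i in auto)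
qed

lemma Tdelta_T: "Tdelta aT bT \<sigma>T i j = \<Delta>T i j"
  by (simp add: Tdelta_def \<Delta>T_def QT_def algebra_simps)

lemma F_eq_plane_pole_T:
  assumes i: "i \<le> m" and j: "j \<le> n"
  shows "det3 e3 (dbT j) (\<Delta>T i j) \<noteq> 0 \<and> F i j = plane_pole (QT i j) (dbT j) (\<Delta>T i j)"
proof (rule eq_plane_pole)
  have m0: "dual_height (F i j) (QT i j) = F i j $ 3" using dual_height_QT[OF i j] by simp
  have m1: "dual_height (F i j) (QT (Suc i) j) = F i j $ 3" using dual_height_QT[OF i j] by simp
  have m2: "dual_height (F i j) (QT i (Suc j)) = F i j $ 3" using dual_height_QT[OF i j] by simp
  show "dual_height (F i j) (QT i j) = F i j $ 3" by (rule m0)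
  show "dual_height (F i j) (\<Delta>T i j) = 0" using m0 m1 by (simp add: \<Delta>T_def dual_height_diff)
  have "QT i (Suc j) - QT i j = \<sigma>T i *\<^sub>R dbT j" by (simp add: QT_def dbT_def algebra_simps)
  then have "\<sigma>T i * dual_height (F i j) (dbT j) = 0" using m0 m2
    by (metis dual_height_diff dual_height_scaleR diff_self)
  then show "dual_height (F i j) (dbT j) = 0" using sigmaT_pos[of i] i by simp
  show "lin_indep (dbT j) (\<Delta>T i j)" using lin_indep_dbT_DeltaT[OF i j] .
qed

lemma T_parametrization_T: "T_parametrization F m n aT bT \<sigma>T"
proof (rule T_parametrization.intro)
  show "\<And>k. k \<le> Suc m \<Longrightarrow> 0 < \<sigma>T k" using sigmaT_pos by simp
  show "\<And>i j. i \<le> m \<Longrightarrow> j \<le> n \<Longrightarrow> det3 e3 (bT (Suc j) - bT j) (Tdelta aT bT \<sigma>T i j) \<noteq> 0"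
    using F_eq_plane_pole_T by (simp add: Tdelta_T dbT_def)
  show "\<And>i j. i \<le> m \<Longrightarrow> j \<le> n \<Longrightarrow> F i j = Tpoint aT bT \<sigma>T (aT i + \<sigma>T i *\<^sub>R bT j) i j"
    using F_eq_plane_pole_T by (simp add: Tpoint_eq_plane_pole Tdelta_T dbT_def QT_def)
  show "0 < m" "1 < n" using dims_ge_2 by auto
  show "is_net F m n" using net .
qed

end

lemma isotropic_columns_T_net_face_dual:
  assumes g: "gen_T_net F m n" and iso: "\<forall>j\<le>n. lies_in_isotropic_plane {F i j | i. i \<le> m}"
  shows "isotropic_columns_T_net F m n (face_dual F)"
proof
  have dc: "dual_convex F m n" using g unfolding gen_T_net_def by simp
  then show "2 \<le> m" "2 \<le> n" unfolding dual_convex_def by simp_all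
  show "is_net F m n" using g unfolding gen_T_net_def by simp
  fix i j
  show "i < m \<Longrightarrow> j < n \<Longrightarrow> F i j \<in> dual_plane (face_dual F i j) \<and> F (Suc i) j \<in> dual_plane (face_dual F i j) \<and>
      F (Suc i) (Suc j) \<in> dual_plane (face_dual F i j) \<and> F i (Suc j) \<in> dual_plane (face_dual F i j)"
  proof -
    assume "i < m" "j < n"
    moreover have "{F i j, F (Suc i) j, F (Suc i) (Suc j), F i (Suc j)} \<subseteq> face_plane F i j"
      unfolding face_plane_def by (rule hull_subset)
    ultimately show ?thesis using face_plane_eq_dual_plane[OF dc] by auto
  qed
  show "0 < i \<Longrightarrow> i < m \<Longrightarrow> 0 < j \<Longrightarrow> j < n \<Longrightarrow>
      admissible_dual_quad (face_dual F (i-1) (j-1)) (face_dual F i (j-1)) (face_dual F i j) (face_dual F (i-1) j)"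
    using inner_vertex_face_duals[OF dc] by blast
next
  fix j assume "j \<le> n"
  then obtain d where "d \<noteq> 0" "\<forall>x\<in>{F i j | i. i \<le> m}. dual_height x d = 0"
    using isotropic_plane_dual_direction[of "{F i j | i. i \<le> m}"] iso by blast
  then show "\<exists>d. d \<noteq> 0 \<and> (\<forall>i\<le>m. dual_height (F i j) d = 0)" by blast
next
  fix i assume "i \<le> m"
  then have "lies_in_plane {F i j | j. j \<le> n}" using g unfolding gen_T_net_def by blast
  then obtain Y \<omega> where "Y \<noteq> 0 \<or> \<omega> \<noteq> 0" "\<forall>x\<in>{F i j | j. j \<le> n}. dual_height x Y = \<omega> * x$3"
    using plane_dual_data by blast
  then show "\<exists>Y \<omega>. (Y \<noteq> 0 \<or> \<omega> \<noteq> 0) \<and> (\<forall>j\<le>n. dual_height (F i j) Y = \<omega> * F i j $ 3)" by blast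
qed

lemma T_representation_if_isotropic_columns:
  assumes "gen_T_net F m n" "\<forall>j\<le>n. lies_in_isotropic_plane {F i j | i. i \<le> m}"
  shows "T_representation F m n"
proof -
  interpret G: isotropic_columns_T_net F m n "face_dual F"
    using isotropic_columns_T_net_face_dual[OF assms] .
  interpret T: T_parametrization F m n G.aT G.bT G.\<sigma>T using G.T_parametrization_T .
  show ?thesis using T.T_representation .
qed

section \<open>Transposition\<close>

lemma face_plane_transpose: "face_plane (\<lambda>i j. F j i) a b = face_plane F b a"
proof -
  have "{F b a, F b (Suc a), F (Suc b) (Suc a), F (Suc b) a} = {F b a, F (Suc b) a, F (Suc b) (Suc a), F b (Suc a)}"
    by auto
  then show ?thesis by (simp add: face_plane_def)
qed

lemma admissible_angle_swap: "admissible_angle V Q1 Q2 Q3 Q4 \<Longrightarrow> admissible_angle V Q2 Q1 Q4 Q3"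
proof -
  assume a: "admissible_angle V Q1 Q2 Q3 Q4"
  have e: "{Q2, Q1, Q4, Q3} = {Q1, Q2, Q3, Q4}" by auto
  have c0: "convex_quad Q1 Q2 Q3 Q4" using a unfolding admissible_angle_def by blast
  have c: "convex_quad Q2 Q1 Q4 Q3"
    using convex_quad_rotate[OF convex_quad_rotate[OF convex_quad_rotate[OF convex_quad_reverse[OF c0]]]] .
  have h: "hedral_angle V Q2 Q1 Q4 Q3 = hedral_angle V Q1 Q2 Q3 Q4" unfolding hedral_angle_def e ..
  show ?thesis using a c unfolding admissible_angle_def h e by blast
qed

lemma is_net_transpose: "is_net F m n \<Longrightarrow> is_net (\<lambda>i j. F j i) n m"
  unfolding is_net_def by (auto intro: convex_quad_reverse)

lemma dual_convex_transpose:
  assumes dc: "dual_convex F m n"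
  shows "dual_convex (\<lambda>i j. F j i) n m"
  unfolding dual_convex_def
proof (intro conjI allI impI)
  show "2 \<le> n" "2 \<le> m" using dc unfolding dual_convex_def by simp_all
  fix i j assume "0 < i \<and> i < n \<and> 0 < j \<and> j < m"
  then obtain V Q1 Q2 Q3 Q4 where adm: "admissible_angle V Q1 Q2 Q3 Q4"
    and faces: "face_plane F (j-1) (i-1) = affine hull {V, Q1, Q2}" "face_plane F j (i-1) = affine hull {V, Q2, Q3}"
      "face_plane F j i = affine hull {V, Q3, Q4}" "face_plane F (j-1) i = affine hull {V, Q4, Q1}"
    using dc unfolding dual_convex_def by blast
  have swap: "{V, Q1, Q2} = {V, Q2, Q1}" "{V, Q4, Q1} = {V, Q1, Q4}" "{V, Q3, Q4} = {V, Q4, Q3}"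
    "{V, Q2, Q3} = {V, Q3, Q2}" by auto
  show "\<exists>V Q1 Q2 Q3 Q4. admissible_angle V Q1 Q2 Q3 Q4 \<and>
      face_plane (\<lambda>i j. F j i) (i-1) (j-1) = affine hull {V, Q1, Q2} \<and>
      face_plane (\<lambda>i j. F j i) i (j-1) = affine hull {V, Q2, Q3} \<and>
      face_plane (\<lambda>i j. F j i) i j = affine hull {V, Q3, Q4} \<and>
      face_plane (\<lambda>i j. F j i) (i-1) j = affine hull {V, Q4, Q1}"
  proof (intro exI conjI)
    show "admissible_angle V Q2 Q1 Q4 Q3" using admissible_angle_swap[OF adm] .
    show "face_plane (\<lambda>i j. F j i) (i-1) (j-1) = affine hull {V, Q2, Q1}"
      unfolding face_plane_transpose[of F] faces(1) swap(1) ..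
    show "face_plane (\<lambda>i j. F j i) i (j-1) = affine hull {V, Q1, Q4}"
      unfolding face_plane_transpose[of F] faces(4) swap(2) ..
    show "face_plane (\<lambda>i j. F j i) i j = affine hull {V, Q4, Q3}"
      unfolding face_plane_transpose[of F] faces(3) swap(3) ..
    show "face_plane (\<lambda>i j. F j i) (i-1) j = affine hull {V, Q3, Q2}"
      unfolding face_plane_transpose[of F] faces(2) swap(4) ..
  qed
qed

lemma gen_T_net_transpose:
  assumes "gen_T_net F m n"
  shows "gen_T_net (\<lambda>i j. F j i) n m"
proof -
  have "is_net (\<lambda>i j. F j i) n m" "dual_convex (\<lambda>i j. F j i) n m"
    using assms is_net_transpose dual_convex_transpose unfolding gen_T_net_def by blast+
  moreover have "\<forall>i\<le>n. lies_in_plane {F j i | j. j \<le> m}" "\<forall>j\<le>m. lies_in_plane {F j i | i. i \<le> n}"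
    "(\<forall>i\<le>n. lies_in_isotropic_plane {F j i | j. j \<le> m}) \<or> (\<forall>j\<le>m. lies_in_isotropic_plane {F j i | i. i \<le> n})"
    using assms unfolding gen_T_net_def by blast+
  ultimately show ?thesis unfolding gen_T_net_def by simp
qed

theorem proposition4:
  fixes F :: "nat \<Rightarrow> nat \<Rightarrow> real^3" and m n :: nat
  assumes "gen_T_net F m n"
  shows "T_representation F m n \<or> T_representation (\<lambda>i j. F j i) n m"
proof -
  have "(\<forall>i\<le>m. lies_in_isotropic_plane {F i j | j. j \<le> n}) \<or>
      (\<forall>j\<le>n. lies_in_isotropic_plane {F i j | i. i \<le> m})"
    using assms unfolding gen_T_net_def by blast
  then show ?thesis
  proof
    assume "\<forall>i\<le>m. lies_in_isotropic_plane {F i j | j. j \<le> n}"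
    then have "T_representation (\<lambda>i j. F j i) n m"
      using T_representation_if_isotropic_columns[OF gen_T_net_transpose[OF assms]] by simp
    then show ?thesis ..
  qed (use T_representation_if_isotropic_columns[OF assms] in blast)
qed

end
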